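(* Let $\mathcal G$ be a constructor GRS over a finite signature $\mathcal F$ that is precedence terminating with argument separation (with precedence $\sqsubset$ and rank $\mathrm{rk}$ used in $\pi_\ell$), and let $d\in\mathbb N$ with $d\ge\max\big(\{\mathrm{ar}(f):f\in\mathcal F\}\cup\{|K{\restriction}r|:(K,l,r)\in\mathcal G_{\mathrm{fin}}\}\big)$. Suppose every rule $(K,l,r)\in\mathcal G_{\mathrm{inf}}$ satisfies: (i) $(K{\restriction}l)\cap\mathrm{nrm}$ is maximally shared; (ii) $K{\restriction}v$ is closed for every labeled node $v\in\mathrm{nrm}(l)$; (iii) $\big|\{v\in\mathrm{nrm}(l): v \text{ unlabeled}\}\cup\bigcup_{v\in\mathrm{safe}(l)}V_{K\restriction v}\big|\le d$; (iv) $|K{\restriction}r|\le|K{\restriction}l|+\big|\bigcup_{v\in\mathrm{nrm}(r)}V_{K\restriction v}\big|$. Then for every closed basic term graph $G_0\in\mathcal{TG}(\mathcal F)$ and all term graphs $G,H$ with $G_0\to^*_{\mathcal G}G\to_{\mathcal G}H$, and every integer $\ell$ with $2\big(\big|\bigcup_{v\in\mathrm{nrm}(\rho_{G_0})}V_{G_0\restriction v}\big|+d\big)\le\ell$, we have $\pi_\ell(H)<\pi_\ell(G)$.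
   Context: Term graphs. $\mathcal F=\mathcal C\cup\mathcal D$ is a finite signature (constructors and defined symbols, disjoint) with arity function $\mathrm{ar}$. A labeled graph consists of a finite acyclic directed graph $(V_G,E_G)$, a partial labeling $\mathrm{lab}_G:V_G\to\mathcal F$ and a successor function $\mathrm{att}_G:V_G\to V_G^*$ such that $\mathrm{att}_G(v)$ has length $\mathrm{ar}(\mathrm{lab}_G(v))$ if $v$ is labeled and is empty otherwise, and the set of entries of $\mathrm{att}_G(v)$ equals $\{u:(v,u)\in E_G\}$. Unlabeled nodes act as variables. A term graph additionally has a root $\rho_G$ from which every node is reachable; $\mathcal{TG}(\mathcal F)$ is the set of term graphs over $\mathcal F$, $\mathcal{TG}(\mathcal C)$ those whose labeled nodes carry constructors. $G{\restriction}v$ is the sub-term graph of nodes reachable from $v$, rooted at $v$; $H\subseteq G$ means $H=G{\restriction}v$ for some $v$. $|G|=|V_G|$; $\mathrm{depth}(G)$ is the length of a longest path from $\rho_G$. $G$ is closed if every node is labeled; basic if $\mathrm{lab}_G(\rho_G)\in\mathcal D$ and $G{\restriction}v\in\mathcal{TG}(\mathcal C)$ for every successor $v$ of $\rho_G$. Choosing an injective map from unlabeled nodes to variables, each $G{\restriction}v$ has a term representation $\mathrm{term}(G{\restriction}v)$; $G$ is maximally shared if $\mathrm{term}(G{\restriction}u)=\mathrm{term}(G{\restriction}v)$ implies $u=v$. Argument separation. The argument positions of each $f\in\mathcal F$ are split into normal and safe ones; constructors have only safe positions; nodes with the same label have the same separation. $\mathrm{nrm}(v)$ (resp. $\mathrm{safe}(v)$)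 is the set of successors of $v$ at normal (resp. safe) positions. $H\sqsubset_{\mathrm{nrm}}G$ means $H\subseteq G{\restriction}v$ for some $v\in\mathrm{nrm}(\rho_G)$. For a term graph $G$ with $\mathrm{att}_G(\rho_G)=v_1,\dots,v_k;v_{k+1},\dots,v_{k+l}$, $G\cap\mathrm{nrm}$ is the term graph with root $\rho_G$ whose nodes are $\rho_G$, the nodes of $G{\restriction}v$ for $v\in\mathrm{nrm}(\rho_G)$ (with their labels and successors from $G$), and $l$ fresh unlabeled nodes $u_1,\dots,u_l$, with $\mathrm{att}(\rho_G)=v_1,\dots,v_k;u_1,\dots,u_l$ (if no safe successor of the root is labeled, $G\cap\mathrm{nrm}=G$). Rewriting. Homomorphisms of labeled graphs preserve labels, successor sequences at labeled nodes (nothing required at unlabeled nodes) and the normal/safe split. A graph rewrite rule $(K,l,r)$ is a labeled graph $K$ with distinct nodes $l,r$ such that every unlabeled node of $K{\restriction}r$ lies in $K{\restriction}l$; it is a constructor rule if $K{\restriction}l$ is basic. A GRS is a (possibly infinite) set of rules; a constructor GRS consists of constructor rules. For a rule $(K,l,r)$ and homomorphism $\varphi:K{\restriction}l\to G$, the step $G\to_{\mathcal G}H$ is the standard build/redirection/garbage-collection step replacing $G{\restriction}\varphi(l)$ by an instance of $K{\restriction}r$ (new labeled nodes are fresh copies, unlabeled nodes are mapped via $\varphi$, edges into $\varphi(l)$ are redirected to the image of $r$, unreachable nodes removed). Since $\mathcal F$ is finite, $\mathcal D$ splits into $\mathcal D_{\mathrm{inf}}$ (symbols defined, i.e. labeling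 a left root, in infinitely many rules of $\mathcal G$) and $\mathcal D_{\mathrm{fin}}$ (the rest); $\mathcal G_{\mathrm{inf}}=\{(K,l,r)\in\mathcal G:\mathrm{lab}_K(l)\in\mathcal D_{\mathrm{inf}}\}$, $\mathcal G_{\mathrm{fin}}=\{(K,l,r)\in\mathcal G:\mathrm{lab}_K(l)\in\mathcal D_{\mathrm{fin}}\}$. Precedence termination with argument separation. A precedence $\sqsubset$ is a well-founded strict partial order on $\mathcal F$ with all constructors minimal, with a rank $\mathrm{rk}:\mathcal F\to\mathbb N$ such that $g\sqsubset f$ implies $\mathrm{rk}(g)<\mathrm{rk}(f)$. $H\sqsubset_{\mathrm{pt}}G$ holds if $\mathrm{lab}_H(v)\sqsubset\mathrm{lab}_G(\rho_G)$ for every labeled node $v$ of $H$ and either (1) $H=G{\restriction}u$ or $H\sqsubset_{\mathrm{pt}}G{\restriction}u$ for some successor $u$ of $\rho_G$; or (2) $\rho_H$ is labeled, $H{\restriction}v\sqsubset_{\mathrm{nrm}}G$ for each $v\in\mathrm{nrm}(\rho_H)$, and $H{\restriction}v\sqsubset_{\mathrm{pt}}G$ for each $v\in\mathrm{safe}(\rho_H)$. $\mathcal G$ is precedence terminating with argument separation if for some separation and precedence, $K{\restriction}r\sqsubset_{\mathrm{pt}}K{\restriction}l$ for every rule. Safe paths, $\mathcal{TG}_{\mathrm{nrm}}$ and interpretation. A path is safe if each next node is a safe successor of the previous; $\mathrm{SP}_G$ is the set of nodes on a safe path from $\rho_G$ (including $\rho_G$). $G\in\mathcal{TG}_{\mathrm{nrm}}(\mathcal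 F)$ iff $G\in\mathcal{TG}(\mathcal C)$, or $G{\restriction}v\in\mathcal{TG}(\mathcal C)$ for all $v\in\mathrm{nrm}(\rho_G)$ and $G{\restriction}v\in\mathcal{TG}_{\mathrm{nrm}}(\mathcal F)$ for all $v\in\mathrm{safe}(\rho_G)$. For positive $\ell$ and closed $G$ with labeled root, $\mathrm{pj}_\ell(G)=(1+\ell)^{2\,\mathrm{rk}(\mathrm{lab}_G(\rho_G))}\big(1+\sum_{u\in\mathrm{nrm}(\rho_G)}\mathrm{depth}(G{\restriction}u)\big)$, and for closed $G\in\mathcal{TG}_{\mathrm{nrm}}(\mathcal F)$, $\pi_\ell(G)=\sum\{\mathrm{pj}_\ell(G{\restriction}v):v\in\mathrm{SP}_G,\ G{\restriction}v\notin\mathcal{TG}(\mathcal C)\}$. *)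

theory Defs
  imports Main
begin

text \<open>Nodes are natural numbers (an infinite supply of fresh nodes).\<close>

record 'f lg =
  nodes :: "nat set"
  lab :: "nat \<Rightarrow> 'f option"
  att :: "nat \<Rightarrow> nat list"

type_synonym 'f tg = "'f lg \<times> nat"

definition edges :: "'f lg \<Rightarrow> (nat \<times> nat) set" where
  "edges G = {(v, u). v \<in> nodes G \<and> u \<in> set (att G v)}"

definition wf_lg :: "('f \<Rightarrow> nat) \<Rightarrow> 'f lg \<Rightarrow> bool" where
  "wf_lg ar G \<longleftrightarrow> finite (nodes G)
     \<and> (\<forall>v. v \<notin> nodes G \<longrightarrow> lab G v = None \<and> att G v = [])
     \<and> (\<forall>v\<in>nodes G. set (att G v) \<subseteq> nodes G
           \<and> length (att G v) = (case lab G v of None \<Rightarrow> 0 | Some f \<Rightarrow> ar f))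
     \<and> acyclic (edges G)"

definition reach :: "'f lg \<Rightarrow> nat \<Rightarrow> nat set" where
  "reach G v = {u. (v, u) \<in> (edges G)\<^sup>*}"

definition is_tg :: "('f \<Rightarrow> nat) \<Rightarrow> 'f tg \<Rightarrow> bool" where
  "is_tg ar T \<longleftrightarrow> wf_lg ar (fst T) \<and> snd T \<in> nodes (fst T) \<and> nodes (fst T) = reach (fst T) (snd T)"

definition restrict_lg :: "'f lg \<Rightarrow> nat set \<Rightarrow> 'f lg" where
  "restrict_lg G A = \<lparr>nodes = A, lab = (\<lambda>v. if v \<in> A then lab G v else None),
                      att = (\<lambda>v. if v \<in> A then att G v else [])\<rparr>"

definition sub :: "'f lg \<Rightarrow> nat \<Rightarrow> 'f tg" where
  "sub G v = (restrict_lg G (reach G v), v)"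

definition closed_tg :: "'f tg \<Rightarrow> bool" where
  "closed_tg T \<longleftrightarrow> (\<forall>v\<in>nodes (fst T). lab (fst T) v \<noteq> None)"

text \<open>\<open>T \<in> TG(C)\<close>: all labeled nodes carry constructors (Cs = set of constructors,
  the defined symbols are the remaining symbols).\<close>
definition constr_tg :: "'f set \<Rightarrow> 'f tg \<Rightarrow> bool" where
  "constr_tg Cs T \<longleftrightarrow> (\<forall>v\<in>nodes (fst T). \<forall>f. lab (fst T) v = Some f \<longrightarrow> f \<in> Cs)"

definition basic_tg :: "'f set \<Rightarrow> 'f tg \<Rightarrow> bool" where
  "basic_tg Cs T \<longleftrightarrow> (\<exists>f. lab (fst T) (snd T) = Some f \<and> f \<notin> Cs)
      \<and> (\<forall>v\<in>set (att (fst T) (snd T)). constr_tg Cs (sub (fst T) v))"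

text \<open>\<open>nn f\<close> is the number of normal argument positions of \<open>f\<close>; the normal positions
  are the first \<open>nn f\<close> ones, the remaining ones are safe.\<close>

definition nrm :: "('f \<Rightarrow> nat) \<Rightarrow> 'f lg \<Rightarrow> nat \<Rightarrow> nat set" where
  "nrm nn G v = (case lab G v of None \<Rightarrow> {} | Some f \<Rightarrow> set (take (nn f) (att G v)))"

definition safe :: "('f \<Rightarrow> nat) \<Rightarrow> 'f lg \<Rightarrow> nat \<Rightarrow> nat set" where
  "safe nn G v = (case lab G v of None \<Rightarrow> {} | Some f \<Rightarrow> set (drop (nn f) (att G v)))"

definition separation :: "('f \<Rightarrow> nat) \<Rightarrow> 'f set \<Rightarrow> ('f \<Rightarrow> nat) \<Rightarrow> bool" where
  "separation ar Cs nn \<longleftrightarrow> (\<forall>f. nn f \<le> ar f) \<and> (\<forall>c\<in>Cs. nn c = 0)"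

definition nrm_below :: "('f \<Rightarrow> nat) \<Rightarrow> 'f tg \<Rightarrow> 'f tg \<Rightarrow> bool" where
  "nrm_below nn H G \<longleftrightarrow> (\<exists>w\<in>nrm nn (fst G) (snd G).
      \<exists>x\<in>nodes (fst (sub (fst G) w)). H = sub (fst (sub (fst G) w)) x)"

text \<open>\<open>G \<inter> nrm\<close>: safe successors of the root replaced by fresh unlabeled nodes.\<close>
definition cap_nrm :: "('f \<Rightarrow> nat) \<Rightarrow> 'f tg \<Rightarrow> 'f tg" where
  "cap_nrm nn T =
    (let G = fst T; \<rho> = snd T; a = att G \<rho>;
         k = (case lab G \<rho> of None \<Rightarrow> 0 | Some f \<Rightarrow> nn f);
         sf = drop k a; m = Suc (Max (nodes G));
         us = map (\<lambda>i. m + i) [0..<length sf];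
         A = {\<rho>} \<union> \<Union> (reach G ` set (take k a)) \<union> set us
     in if (\<forall>v\<in>set sf. lab G v = None) then T
        else (\<lparr>nodes = A,
               lab = (\<lambda>v. if v \<in> A - set us then lab G v else None),
               att = (\<lambda>v. if v = \<rho> then take k a @ us
                          else if v \<in> A - set us then att G v else [])\<rparr>, \<rho>))"

datatype 'f trm = Var nat | Fn 'f "'f trm list"

text \<open>Term representation of \<open>G\<restriction>v\<close>; unlabeled nodes are mapped injectively to variables
  (the node itself serves as variable name).\<close>
inductive repr :: "'f lg \<Rightarrow> nat \<Rightarrow> 'f trm \<Rightarrow> bool" for G where
  "lab G v = None \<Longrightarrow> repr G v (Var v)"
| "lab G v = Some f \<Longrightarrow> list_all2 (repr G) (att G v) ts \<Longrightarrow> repr G v (Fn f ts)"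

definition max_shared :: "'f tg \<Rightarrow> bool" where
  "max_shared T \<longleftrightarrow> (\<forall>u\<in>nodes (fst T). \<forall>v\<in>nodes (fst T). \<forall>t.
      repr (fst T) u t \<and> repr (fst T) v t \<longrightarrow> u = v)"

definition precedence :: "'f set \<Rightarrow> ('f \<Rightarrow> 'f \<Rightarrow> bool) \<Rightarrow> ('f \<Rightarrow> nat) \<Rightarrow> bool" where
  "precedence Cs prec rk \<longleftrightarrow> wfP prec \<and> transp prec
      \<and> (\<forall>c\<in>Cs. \<forall>g. \<not> prec g c) \<and> (\<forall>f g. prec g f \<longrightarrow> rk g < rk f)"

definition lab_below :: "('f \<Rightarrow> 'f \<Rightarrow> bool) \<Rightarrow> 'f tg \<Rightarrow> 'f tg \<Rightarrow> bool" where
  "lab_below prec H G \<longleftrightarrow> (\<forall>v\<in>nodes (fst H). \<forall>g. lab (fst H) v = Some g \<longrightarrow>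
      (\<exists>f. lab (fst G) (snd G) = Some f \<and> prec g f))"

inductive pt :: "('f \<Rightarrow> nat) \<Rightarrow> ('f \<Rightarrow> 'f \<Rightarrow> bool) \<Rightarrow> 'f tg \<Rightarrow> 'f tg \<Rightarrow> bool"
  for nn prec where
  pt_sub: "lab_below prec H G \<Longrightarrow> u \<in> set (att (fst G) (snd G)) \<Longrightarrow>
     H = sub (fst G) u \<or> pt nn prec H (sub (fst G) u) \<Longrightarrow> pt nn prec H G"
| pt_fun: "lab_below prec H G \<Longrightarrow> lab (fst H) (snd H) \<noteq> None \<Longrightarrow>
     \<forall>v\<in>nrm nn (fst H) (snd H). nrm_below nn (sub (fst H) v) G \<Longrightarrow>
     \<forall>v\<in>safe nn (fst H) (snd H). pt nn prec (sub (fst H) v) G \<Longrightarrow> pt nn prec H G"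

type_synonym 'f rule = "'f lg \<times> nat \<times> nat"

definition is_rule :: "('f \<Rightarrow> nat) \<Rightarrow> 'f rule \<Rightarrow> bool" where
  "is_rule ar R \<longleftrightarrow> (case R of (K, l, r) \<Rightarrow>
      wf_lg ar K \<and> l \<in> nodes K \<and> r \<in> nodes K \<and> l \<noteq> r
      \<and> (\<forall>v\<in>nodes (fst (sub K r)). lab K v = None \<longrightarrow> v \<in> nodes (fst (sub K l))))"

definition constructor_rule :: "('f \<Rightarrow> nat) \<Rightarrow> 'f set \<Rightarrow> 'f rule \<Rightarrow> bool" where
  "constructor_rule ar Cs R \<longleftrightarrow> is_rule ar R \<and> (case R of (K, l, r) \<Rightarrow> basic_tg Cs (sub K l))"

text \<open>Homomorphism from a term graph into a labeled graph (normal/safe split is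
  preserved automatically as it is determined by the labels).\<close>
definition hom :: "'f tg \<Rightarrow> 'f lg \<Rightarrow> (nat \<Rightarrow> nat) \<Rightarrow> bool" where
  "hom L G \<phi> \<longleftrightarrow> (\<forall>v\<in>nodes (fst L). \<phi> v \<in> nodes G \<and>
      (lab (fst L) v \<noteq> None \<longrightarrow> lab G (\<phi> v) = lab (fst L) v \<and> att G (\<phi> v) = map \<phi> (att (fst L) v)))"

definition labeled_nodes :: "'f tg \<Rightarrow> nat set" where
  "labeled_nodes T = {v\<in>nodes (fst T). lab (fst T) v \<noteq> None}"

text \<open>Result of the rewrite step with rule (K,l,r), matching \<open>\<phi>\<close> and fresh-copy map \<open>c\<close>
  (build, redirection, garbage collection).\<close>
definition rewrite_result :: "'f tg \<Rightarrow> 'f lg \<Rightarrow> nat \<Rightarrow> nat \<Rightarrow> (nat \<Rightarrow> nat) \<Rightarrow> (nat \<Rightarrow> nat) \<Rightarrow> 'f tg" where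
  "rewrite_result G K l r \<phi> c =
    (let N = labeled_nodes (sub K r);
         \<psi> = (\<lambda>v. if v \<in> N then c v else \<phi> v);
         G1 = \<lparr>nodes = nodes (fst G) \<union> c ` N,
               lab = (\<lambda>w. if w \<in> c ` N then lab K (inv_into N c w) else lab (fst G) w),
               att = (\<lambda>w. if w \<in> c ` N then map \<psi> (att K (inv_into N c w)) else att (fst G) w)\<rparr>;
         red = (\<lambda>x. if x = \<phi> l then \<psi> r else x);
         G2 = G1\<lparr>att := (\<lambda>w. map red (att G1 w))\<rparr>
     in sub G2 (red (snd G)))"

definition rstep :: "('f \<Rightarrow> nat) \<Rightarrow> 'f rule set \<Rightarrow> 'f tg \<Rightarrow> 'f tg \<Rightarrow> bool" where
  "rstep ar Gs G H \<longleftrightarrow> is_tg ar G \<and> (\<exists>K l r \<phi> c. (K, l, r) \<in> Gs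
      \<and> hom (sub K l) (fst G) \<phi>
      \<and> inj_on c (labeled_nodes (sub K r))
      \<and> c ` labeled_nodes (sub K r) \<inter> nodes (fst G) = {}
      \<and> H = rewrite_result G K l r \<phi> c)"

definition D_inf :: "'f set \<Rightarrow> 'f rule set \<Rightarrow> 'f set" where
  "D_inf Cs Gs = {f. f \<notin> Cs \<and> infinite {(K, l, r)\<in>Gs. lab K l = Some f}}"

definition G_inf :: "'f set \<Rightarrow> 'f rule set \<Rightarrow> 'f rule set" where
  "G_inf Cs Gs = {(K, l, r)\<in>Gs. \<exists>f. lab K l = Some f \<and> f \<in> D_inf Cs Gs}"

definition G_fin :: "'f set \<Rightarrow> 'f rule set \<Rightarrow> 'f rule set" where
  "G_fin Cs Gs = {(K, l, r)\<in>Gs. \<exists>f. lab K l = Some f \<and> f \<notin> Cs \<and> f \<notin> D_inf Cs Gs}"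

definition depth :: "'f tg \<Rightarrow> nat" where
  "depth T = Max {n. \<exists>u. (snd T, u) \<in> (edges (fst T)) ^^ n}"

inductive tg_nrm :: "'f set \<Rightarrow> ('f \<Rightarrow> nat) \<Rightarrow> 'f tg \<Rightarrow> bool" for Cs nn where
  "constr_tg Cs T \<Longrightarrow> tg_nrm Cs nn T"
| "\<forall>v\<in>nrm nn (fst T) (snd T). constr_tg Cs (sub (fst T) v) \<Longrightarrow>
   \<forall>v\<in>safe nn (fst T) (snd T). tg_nrm Cs nn (sub (fst T) v) \<Longrightarrow> tg_nrm Cs nn T"

definition safe_edges :: "('f \<Rightarrow> nat) \<Rightarrow> 'f lg \<Rightarrow> (nat \<times> nat) set" where
  "safe_edges nn G = {(v, u). v \<in> nodes G \<and> u \<in> safe nn G v}"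

definition SP :: "('f \<Rightarrow> nat) \<Rightarrow> 'f tg \<Rightarrow> nat set" where
  "SP nn T = {v. (snd T, v) \<in> (safe_edges nn (fst T))\<^sup>*}"

definition pj :: "('f \<Rightarrow> nat) \<Rightarrow> ('f \<Rightarrow> nat) \<Rightarrow> nat \<Rightarrow> 'f tg \<Rightarrow> nat" where
  "pj rk nn ell T = (1 + ell) ^ (2 * rk (the (lab (fst T) (snd T))))
      * (1 + (\<Sum>u\<in>nrm nn (fst T) (snd T). depth (sub (fst T) u)))"

definition pi :: "'f set \<Rightarrow> ('f \<Rightarrow> nat) \<Rightarrow> ('f \<Rightarrow> nat) \<Rightarrow> nat \<Rightarrow> 'f tg \<Rightarrow> nat" where
  "pi Cs rk nn ell T = (\<Sum>v\<in>{v\<in>SP nn T. \<not> constr_tg Cs (sub (fst T) v)}. pj rk nn ell (sub (fst T) v))"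

end

theory Submission
  imports Defs
begin

text \<open>Along a reduction from a basic term graph \<open>G0\<close> two invariants hold: every normal argument
  of every node is a constructor term graph, and every term represented below a normal argument
  already occurs below a normal argument of \<open>G0\<close>; call this finite set of terms \<open>T\<close>. By the
  first invariant all non-constructor nodes lie on safe paths, so \<open>\<pi>\<close> sums \<open>pj\<close> over all of them.
  In a step at the redex \<open>\<phi> l\<close>, nodes not reaching the redex keep their weight and the redex
  itself disappears, contributing \<open>(1 + \<ell>)^(2 rk f) (1 + D)\<close> with \<open>D\<close> the summed depth of its
  normal arguments. The new nodes are copies of labeled nodes of the right-hand side; their symbols
  are below \<open>f\<close> in the precedence and, by precedence termination, their normal arguments are
  images of subgraphs of normal arguments of \<open>l\<close>, so each copy weighs at most
  \<open>(1 + \<ell>)^(2 rk f - 2) (1 + d D)\<close>. There are at most \<open>1 + \<ell>\<close> copies: for finitely defined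
  symbols by the choice of \<open>d\<close>, and otherwise because maximal sharing makes the term representation
  injective on the closed normal part of the left-hand side, whose terms lie in \<open>T\<close>; conditions
  (iii) and (iv) then give \<open>|K\<restriction>r| \<le> 1 + 2 |T| + 2 d\<close>.\<close>

section \<open>Reachability and sub-term graphs\<close>

definition att_closed :: "'f lg \<Rightarrow> bool" where
  "att_closed G \<longleftrightarrow> (\<forall>v\<in>nodes G. set (att G v) \<subseteq> nodes G)"

lemma edges_iff: "(v, u) \<in> edges G \<longleftrightarrow> v \<in> nodes G \<and> u \<in> set (att G v)"
  by (simp add: edges_def)

lemma reach_refl [simp]: "x \<in> reach G x"
  by (simp add: reach_def)

lemma reach_trans: "y \<in> reach G x \<Longrightarrow> z \<in> reach G y \<Longrightarrow> z \<in> reach G x"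
  by (simp add: reach_def)

lemma reach_att: "x \<in> nodes G \<Longrightarrow> u \<in> set (att G x) \<Longrightarrow> u \<in> reach G x"
  by (auto simp: reach_def edges_def)

lemma reach_att_trans: "y \<in> reach G x \<Longrightarrow> y \<in> nodes G \<Longrightarrow> u \<in> set (att G y) \<Longrightarrow> u \<in> reach G x"
  using reach_trans reach_att by blast

lemma wf_lg_att_closed: "wf_lg ar G \<Longrightarrow> att_closed G"
  by (simp add: wf_lg_def att_closed_def)

lemma wf_lg_labeled_if_att: "wf_lg ar G \<Longrightarrow> v \<in> nodes G \<Longrightarrow> u \<in> set (att G v) \<Longrightarrow> lab G v \<noteq> None"
  by (cases "lab G v") (auto simp: wf_lg_def)

lemma reach_subset_nodes:
  assumes "att_closed G" "x \<in> nodes G"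
  shows "reach G x \<subseteq> nodes G"
proof
  fix z assume "z \<in> reach G x"
  then have "(x, z) \<in> (edges G)\<^sup>*" by (simp add: reach_def)
  then show "z \<in> nodes G"
    by induction (use assms in \<open>auto simp: edges_def att_closed_def\<close>)
qed

lemma reach_unfold:
  assumes "x \<in> nodes G"
  shows "reach G x = insert x (\<Union>u\<in>set (att G x). reach G u)"
proof
  show "reach G x \<subseteq> insert x (\<Union>u\<in>set (att G x). reach G u)"
  proof
    fix z assume "z \<in> reach G x"
    then have "(x, z) \<in> (edges G)\<^sup>*" by (simp add: reach_def)
    then show "z \<in> insert x (\<Union>u\<in>set (att G x). reach G u)"
      by (cases rule: converse_rtranclE) (auto simp: edges_iff reach_def)
  qed
  show "insert x (\<Union>u\<in>set (att G x). reach G u) \<subseteq> reach G x"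
    using reach_att[OF assms] by (auto intro: reach_trans)
qed

lemma reach_unlabeled:
  assumes "wf_lg ar G" "v \<in> nodes G" "lab G v = None"
  shows "reach G v = {v}"
proof -
  have "att G v = []" using assms by (auto simp: wf_lg_def)
  then show ?thesis using reach_unfold[OF assms(2)] by simp
qed

lemma reach_antisym: "acyclic (edges G) \<Longrightarrow> y \<in> reach G x \<Longrightarrow> x \<in> reach G y \<Longrightarrow> x = y"
  by (auto simp: reach_def acyclic_def dest: rtranclD rtrancl_trancl_trancl)

lemma sub_simps [simp]:
  "snd (sub G y) = y"
  "nodes (fst (sub G y)) = reach G y"
  "lab (fst (sub G y)) v = (if v \<in> reach G y then lab G v else None)"
  "att (fst (sub G y)) v = (if v \<in> reach G y then att G v else [])"
  by (simp_all add: sub_def restrict_lg_def)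

lemma reach_agree:
  assumes "att_closed G" "x \<in> nodes G"
    and agree: "\<forall>z\<in>reach G x. z \<in> nodes G' \<and> att G' z = att G z"
  shows "reach G' x = reach G x"
proof
  show "reach G x \<subseteq> reach G' x"
  proof
    fix z assume "z \<in> reach G x"
    then have "(x, z) \<in> (edges G)\<^sup>*" by (simp add: reach_def)
    then have "(x, z) \<in> (edges G')\<^sup>*"
    proof induction
      case (step y z)
      then have "(y, z) \<in> edges G'" using agree by (simp add: edges_iff reach_def)
      with step.IH show ?case by (rule rtrancl_into_rtrancl)
    qed simp
    then show "z \<in> reach G' x" by (simp add: reach_def)
  qed
  show "reach G' x \<subseteq> reach G x"
  proof
    fix z assume "z \<in> reach G' x"
    then have "(x, z) \<in> (edges G')\<^sup>*" by (simp add: reach_def)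
    then show "z \<in> reach G x"
    proof induction
      case (step y z)
      have "y \<in> nodes G" using step.IH reach_subset_nodes[OF assms(1,2)] by blast
      with step show ?case using agree by (auto simp: edges_iff intro: reach_att_trans)
    qed simp
  qed
qed

lemma sub_agree:
  assumes "reach G' x = reach G x" "\<forall>z\<in>reach G x. lab G' z = lab G z \<and> att G' z = att G z"
  shows "sub G' x = sub G x"
  using assms by (auto simp: sub_def restrict_lg_def fun_eq_iff)

lemma reach_sub:
  assumes "att_closed G" "y \<in> nodes G" "x \<in> reach G y"
  shows "reach (fst (sub G y)) x = reach G x"
proof -
  have "\<forall>z\<in>reach G x. z \<in> reach G y \<and> att (fst (sub G y)) z = att G z"
    using reach_trans[OF assms(3)] by simp
  moreover have "x \<in> nodes G" using assms reach_subset_nodes by blast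
  ultimately show ?thesis by (intro reach_agree) (auto simp: assms(1))
qed

lemma sub_sub:
  assumes "att_closed G" "y \<in> nodes G" "x \<in> reach G y"
  shows "sub (fst (sub G y)) x = sub G x"
  using reach_sub[OF assms] reach_trans[OF assms(3)] by (intro sub_agree) auto

lemma att_subset_reach:
  assumes "att_closed G" "x \<in> nodes G" "v \<in> reach G x"
  shows "set (att G v) \<subseteq> reach G x"
  using reach_subset_nodes[OF assms(1,2)] assms(3) reach_att_trans by blast

lemma att_closed_sub:
  assumes "att_closed G" "y \<in> nodes G"
  shows "att_closed (fst (sub G y))"
  using att_subset_reach[OF assms] by (simp add: att_closed_def)

lemma relpow_sub_iff:
  assumes "att_closed G" "x \<in> nodes G"
  shows "(x, u) \<in> edges (fst (sub G x)) ^^ n \<longleftrightarrow> (x, u) \<in> edges G ^^ n"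
proof (induction n arbitrary: u)
  case (Suc n)
  have "(y, u) \<in> edges (fst (sub G x)) \<longleftrightarrow> (y, u) \<in> edges G" if "(x, y) \<in> edges G ^^ n" for y
    using relpow_imp_rtrancl[OF that] reach_subset_nodes[OF assms]
    by (auto simp: edges_iff reach_def)
  then show ?case using Suc.IH by (meson relpow_Suc_E relpow_Suc_I)
qed simp

lemma path_length_le_card:
  assumes "finite (nodes G)" "att_closed G" "acyclic (edges G)" "(x, z) \<in> edges G ^^ n"
  shows "n \<le> card {y. (x, y) \<in> (edges G)\<^sup>+}"
  using assms(4)
proof (induction n arbitrary: x)
  case (Suc n)
  from Suc.prems obtain y where xy: "(x, y) \<in> edges G" and yz: "(y, z) \<in> edges G ^^ n"
    by (rule relpow_Suc_E2)
  have E: "edges G \<subseteq> nodes G \<times> nodes G"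
    using assms(2) by (auto simp: edges_def att_closed_def)
  have "finite {w. (x, w) \<in> (edges G)\<^sup>+}"
    using trancl_subset_Sigma[OF E] assms(1) by (auto intro: finite_subset)
  moreover have "{w. (y, w) \<in> (edges G)\<^sup>+} \<subset> {w. (x, w) \<in> (edges G)\<^sup>+}"
  proof
    show "{w. (y, w) \<in> (edges G)\<^sup>+} \<subseteq> {w. (x, w) \<in> (edges G)\<^sup>+}"
      using xy by (auto intro: trancl_into_trancl2)
    have "(y, y) \<notin> (edges G)\<^sup>+" using assms(3) by (simp add: acyclic_def)
    then show "{w. (y, w) \<in> (edges G)\<^sup>+} \<noteq> {w. (x, w) \<in> (edges G)\<^sup>+}"
      using xy by blast
  qed
  ultimately have "card {w. (y, w) \<in> (edges G)\<^sup>+} < card {w. (x, w) \<in> (edges G)\<^sup>+}"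
    by (rule psubset_card_mono)
  then show ?case using Suc.IH[OF yz] by simp
qed simp

lemma depth_sub_eq:
  assumes "att_closed G" "x \<in> nodes G"
  shows "depth (sub G x) = Max {n. \<exists>u. (x, u) \<in> edges G ^^ n}"
proof -
  have "{n. \<exists>u. (x, u) \<in> edges (fst (sub G x)) ^^ n} = {n. \<exists>u. (x, u) \<in> edges G ^^ n}"
    using relpow_sub_iff[OF assms] by blast
  then show ?thesis by (simp only: depth_def snd_conv sub_simps(1))
qed

lemma depth_sub_ge:
  assumes "finite (nodes G)" "att_closed G" "acyclic (edges G)" "x \<in> nodes G"
    and "(x, u) \<in> edges G ^^ n"
  shows "n \<le> depth (sub G x)"
proof -
  have E: "edges G \<subseteq> nodes G \<times> nodes G"
    using assms(2) by (auto simp: edges_def att_closed_def)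
  have "card {y. (x, y) \<in> (edges G)\<^sup>+} \<le> card (nodes G)"
    using trancl_subset_Sigma[OF E] assms(1) by (intro card_mono) auto
  then have "{n. \<exists>u. (x, u) \<in> edges G ^^ n} \<subseteq> {..card (nodes G)}"
    using path_length_le_card[OF assms(1-3)] by (auto intro: order_trans)
  then have "finite {n. \<exists>u. (x, u) \<in> edges G ^^ n}" using finite_subset by blast
  then show ?thesis
    unfolding depth_sub_eq[OF assms(2,4)] using assms(5) by (intro Max_ge) auto
qed

lemma depth_sub_le:
  assumes "att_closed G" "x \<in> nodes G" and "\<And>n u. (x, u) \<in> edges G ^^ n \<Longrightarrow> n \<le> B"
  shows "depth (sub G x) \<le> B"
proof -
  let ?S = "{n. \<exists>u. (x, u) \<in> edges G ^^ n}"
  have "0 \<in> ?S" by simp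
  moreover have "?S \<subseteq> {..B}" using assms(3) by blast
  then have "finite ?S" using finite_subset by blast
  ultimately show ?thesis
    unfolding depth_sub_eq[OF assms(1,2)] using assms(3) by (intro Max.boundedI) blast+
qed

lemma depth_sub_mono:
  assumes "finite (nodes G)" "att_closed G" "acyclic (edges G)" "x \<in> nodes G" "y \<in> reach G x"
  shows "depth (sub G y) \<le> depth (sub G x)"
proof (rule depth_sub_le)
  show "y \<in> nodes G" using assms(2,4,5) reach_subset_nodes by blast
  fix n u assume "(y, u) \<in> edges G ^^ n"
  moreover obtain m where "(x, y) \<in> edges G ^^ m"
    using assms(5) by (auto simp: reach_def dest: rtrancl_imp_relpow)
  ultimately have "(x, u) \<in> edges G ^^ (m + n)" by (rule relpow_trans[rotated])
  then have "m + n \<le> depth (sub G x)" by (rule depth_sub_ge[OF assms(1-4)])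
  then show "n \<le> depth (sub G x)" by simp
qed (rule assms(2))

lemma repr_unique: "repr G x t \<Longrightarrow> repr G x t' \<Longrightarrow> t = t'"
proof (induction arbitrary: t' rule: repr.induct)
  case (1 v)
  then show ?case by (auto elim: repr.cases)
next
  case (2 v f ts)
  from 2(3) obtain ts' where "list_all2 (repr G) (att G v) ts'" "t' = Fn f ts'"
    using 2(1) by (auto elim: repr.cases)
  moreover from this(1) have "ts = ts'"
    using 2(2) by (auto simp: list_all2_conv_all_nth intro!: nth_equalityI)
  ultimately show ?case by simp
qed

lemma repr_exists:
  assumes "finite (nodes G)" "att_closed G" "acyclic (edges G)" "x \<in> nodes G"
  shows "\<exists>t. repr G x t"
proof -
  have "edges G \<subseteq> nodes G \<times> nodes G" using assms(2) by (auto simp: edges_def att_closed_def)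
  then have "finite (edges G)" using assms(1) finite_subset by blast
  then have "wf ((edges G)\<inverse>)" using assms(3) by (rule finite_acyclic_wf_converse)
  then show ?thesis using assms(4)
  proof (induction x rule: wf_induct_rule)
    case (less x)
    show ?case
    proof (cases "lab G x")
      case None
      then show ?thesis by (blast intro: repr.intros)
    next
      case (Some f)
      have "\<exists>t. repr G u t" if "u \<in> set (att G x)" for u
      proof (rule less.IH)
        show "(u, x) \<in> (edges G)\<inverse>" using that less.prems by (simp add: edges_iff)
        show "u \<in> nodes G" using that less.prems assms(2) by (auto simp: att_closed_def)
      qed
      then obtain g where "\<forall>u\<in>set (att G x). repr G u (g u)" by metis
      then have "list_all2 (repr G) (att G x) (map g (att G x))"
        by (simp add: list_all2_map2 list_all2_same)
      then show ?thesis using Some by (blast intro: repr.intros)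
    qed
  qed
qed

lemma repr_agree:
  assumes "repr G x t" "x \<in> A"
    and "\<forall>z\<in>A. lab G' z = lab G z \<and> att G' z = att G z \<and> set (att G z) \<subseteq> A"
  shows "repr G' x t"
  using assms(1,2)
proof (induction rule: repr.induct)
  case (1 v)
  then show ?case using assms(3) by (auto intro: repr.intros)
next
  case (2 v f ts)
  have "list_all2 (repr G') (att G v) ts"
    using 2(2) by (rule list.rel_mono_strong) (use 2(3) assms(3) in blast)
  then show ?case using 2 assms(3) by (auto intro: repr.intros)
qed

text \<open>Unlike \<open>hom\<close>, this also constrains unlabeled nodes, so it preserves term representations.\<close>
definition morph_on :: "nat set \<Rightarrow> (nat \<Rightarrow> nat) \<Rightarrow> 'f lg \<Rightarrow> 'f lg \<Rightarrow> bool" where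
  "morph_on S \<theta> G' G \<longleftrightarrow> (\<forall>x\<in>S. x \<in> nodes G' \<and> \<theta> x \<in> nodes G \<and> lab G' x = lab G (\<theta> x)
      \<and> att G (\<theta> x) = map \<theta> (att G' x) \<and> set (att G' x) \<subseteq> S)"

lemma morph_on_relpow:
  assumes "morph_on S \<theta> G' G" "x \<in> S" "(x, z) \<in> edges G' ^^ n"
  shows "z \<in> S \<and> (\<theta> x, \<theta> z) \<in> edges G ^^ n"
  using assms(3)
proof (induction n arbitrary: z)
  case 0
  then show ?case using assms(2) by simp
next
  case (Suc n)
  from Suc.prems obtain y where xy: "(x, y) \<in> edges G' ^^ n" and yz: "(y, z) \<in> edges G'"
    by (rule relpow_Suc_E)
  have "y \<in> S" "(\<theta> x, \<theta> y) \<in> edges G ^^ n" using Suc.IH[OF xy] by auto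
  moreover from this(1) have "z \<in> S" "(\<theta> y, \<theta> z) \<in> edges G"
    using assms(1) yz by (auto simp: morph_on_def edges_iff)
  ultimately show ?case by auto
qed

lemma morph_on_reach:
  assumes "morph_on S \<theta> G' G" "x \<in> S" "z \<in> reach G' x"
  shows "z \<in> S \<and> \<theta> z \<in> reach G (\<theta> x)"
proof -
  obtain n where "(x, z) \<in> edges G' ^^ n"
    using assms(3) by (auto simp: reach_def dest: rtrancl_imp_relpow)
  then have "z \<in> S" "(\<theta> x, \<theta> z) \<in> edges G ^^ n" using morph_on_relpow[OF assms(1,2)] by auto
  then show ?thesis by (auto simp: reach_def dest: relpow_imp_rtrancl)
qed

lemma morph_on_repr:
  assumes "morph_on S \<theta> G' G" "repr G' x t" "x \<in> S"
    and fix_vars: "\<forall>x\<in>S. lab G' x = None \<longrightarrow> \<theta> x = x"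
  shows "repr G (\<theta> x) t"
  using assms(2,3)
proof (induction rule: repr.induct)
  case (1 v)
  then have "\<theta> v = v" "lab G (\<theta> v) = None" using assms(1) fix_vars by (auto simp: morph_on_def)
  then show ?case by (metis repr.intros(1))
next
  case (2 v f ts)
  have m: "lab G (\<theta> v) = Some f" "att G (\<theta> v) = map \<theta> (att G' v)" "set (att G' v) \<subseteq> S"
    using assms(1) 2 by (auto simp: morph_on_def)
  have "list_all2 (\<lambda>a b. repr G (\<theta> a) b) (att G' v) ts"
    using 2(2) by (rule list.rel_mono_strong) (use m(3) in blast)
  then have "list_all2 (repr G) (att G (\<theta> v)) ts" using m(2) by (simp add: list_all2_map1)
  then show ?case using m(1) by (auto intro: repr.intros)
qed

lemma morph_on_depth:
  assumes "morph_on S \<theta> G' G" "x \<in> S" "att_closed G'"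
    and "finite (nodes G)" "att_closed G" "acyclic (edges G)"
  shows "depth (sub G' x) \<le> depth (sub G (\<theta> x))"
proof (rule depth_sub_le)
  show "x \<in> nodes G'" using assms(1,2) by (auto simp: morph_on_def)
  fix n u assume "(x, u) \<in> edges G' ^^ n"
  then have "(\<theta> x, \<theta> u) \<in> edges G ^^ n" using morph_on_relpow[OF assms(1,2)] by blast
  moreover have "\<theta> x \<in> nodes G" using assms(1,2) by (auto simp: morph_on_def)
  ultimately show "n \<le> depth (sub G (\<theta> x))" using depth_sub_ge[OF assms(4-6)] by blast
qed (rule assms(3))

definition nrm_nodes :: "('f \<Rightarrow> nat) \<Rightarrow> 'f lg \<Rightarrow> nat \<Rightarrow> nat set" where
  "nrm_nodes nn G v = (\<Union>w\<in>nrm nn G v. reach G w)"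

definition nrm_region :: "('f \<Rightarrow> nat) \<Rightarrow> 'f lg \<Rightarrow> nat \<Rightarrow> nat set" where
  "nrm_region nn G g = (\<Union>y\<in>reach G g. nrm_nodes nn G y)"

lemma nrm_sub: "v \<in> reach G h \<Longrightarrow> nrm nn (fst (sub G h)) v = nrm nn G v"
  by (simp add: nrm_def split: option.splits)

lemma safe_sub: "v \<in> reach G h \<Longrightarrow> safe nn (fst (sub G h)) v = safe nn G v"
  by (simp add: safe_def split: option.splits)

lemma nrm_subset_att: "nrm nn G v \<subseteq> set (att G v)"
  by (auto simp: nrm_def split: option.splits dest: in_set_takeD)

lemma safe_subset_att: "safe nn G v \<subseteq> set (att G v)"
  by (auto simp: safe_def split: option.splits dest: in_set_dropD)

lemma finite_nrm: "finite (nrm nn G v)"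
  by (simp add: nrm_def split: option.splits)

lemma att_eq_nrm_Un_safe: "lab G v \<noteq> None \<Longrightarrow> set (att G v) = nrm nn G v \<union> safe nn G v"
  unfolding nrm_def safe_def by (metis append_take_drop_id option.case_eq_if set_append)

lemma nrm_eq_empty_if_constr:
  "separation ar Cs nn \<Longrightarrow> (\<forall>g. lab G v = Some g \<longrightarrow> g \<in> Cs) \<Longrightarrow> nrm nn G v = {}"
  by (auto simp: nrm_def separation_def split: option.splits)

lemma constr_tg_sub_iff: "constr_tg Cs (sub G w) \<longleftrightarrow> (\<forall>z\<in>reach G w. \<forall>f. lab G z = Some f \<longrightarrow> f \<in> Cs)"
  by (auto simp: constr_tg_def)

lemma constr_tg_sub_mono: "constr_tg Cs (sub G y) \<Longrightarrow> z \<in> reach G y \<Longrightarrow> constr_tg Cs (sub G z)"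
  unfolding constr_tg_sub_iff by (meson reach_trans)

lemma reach_subset_nrm_nodes:
  assumes "u \<in> nrm_nodes nn G g"
  shows "reach G u \<subseteq> nrm_nodes nn G g"
proof
  fix x assume "x \<in> reach G u"
  moreover obtain w where "w \<in> nrm nn G g" "u \<in> reach G w" using assms by (auto simp: nrm_nodes_def)
  ultimately show "x \<in> nrm_nodes nn G g" by (auto simp: nrm_nodes_def dest: reach_trans)
qed

lemma nrm_subset_nrm_region: "y \<in> reach G g \<Longrightarrow> nrm nn G y \<subseteq> nrm_region nn G g"
  unfolding nrm_region_def nrm_nodes_def using reach_refl by blast

lemma nrm_nodes_subset_nrm_region: "y \<in> reach G g \<Longrightarrow> nrm_nodes nn G y \<subseteq> nrm_region nn G g"
  by (auto simp: nrm_region_def)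

lemma nrm_nodes_subset_reach: "g \<in> nodes G \<Longrightarrow> nrm_nodes nn G g \<subseteq> reach G g"
  unfolding nrm_nodes_def using nrm_subset_att reach_att reach_trans by blast

lemma nrm_region_mono: "u \<in> reach G g \<Longrightarrow> nrm_region nn G u \<subseteq> nrm_region nn G g"
  unfolding nrm_region_def using reach_trans by blast

section \<open>Precedence termination\<close>

lemma nrm_below_sub:
  assumes "nrm_below nn H (sub G g)" "att_closed G" "g \<in> nodes G"
  shows "snd H \<in> nrm_nodes nn G g"
proof -
  obtain w x where w: "w \<in> nrm nn (fst (sub G g)) g" and x: "x \<in> reach (fst (sub G g)) w"
    and H: "H = sub (fst (sub (fst (sub G g)) w)) x"
    using assms(1) unfolding nrm_below_def sub_simps(1,2) by blast
  have "w \<in> nrm nn G g" using w nrm_sub[OF reach_refl] by metis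
  moreover from this have "w \<in> reach G g" using nrm_subset_att reach_att[OF assms(3)] by blast
  ultimately show ?thesis using x H reach_sub[OF assms(2,3)] by (auto simp: nrm_nodes_def)
qed

lemma nrm_nodes_subset_if_nrm_below:
  assumes "\<forall>v\<in>nrm nn G h. nrm_below nn (sub (fst (sub G h)) v) (sub G g)" "att_closed G" "g \<in> nodes G"
  shows "nrm_nodes nn G h \<subseteq> nrm_nodes nn G g"
proof
  fix x assume "x \<in> nrm_nodes nn G h"
  then obtain v where v: "v \<in> nrm nn G h" and x: "x \<in> reach G v" by (auto simp: nrm_nodes_def)
  have "v \<in> nrm_nodes nn G g" using nrm_below_sub[OF _ assms(2,3)] assms(1) v by fastforce
  then show "x \<in> nrm_nodes nn G g" using reach_subset_nrm_nodes x by blast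
qed

lemma pt_lab_below: "pt nn prec H G \<Longrightarrow> lab_below prec H G"
  by (induction rule: pt.induct) auto

text \<open>For a rule, \<open>h = r\<close> and \<open>g = l\<close>: precedence termination keeps every normal argument of the
  right-hand side inside the normal region of the left-hand side.\<close>
lemma pt_nrm_subset_nrm_region:
  assumes "pt nn prec H G" "att_closed K"
  shows "H = sub K h \<Longrightarrow> G = sub K g \<Longrightarrow> h \<in> nodes K \<Longrightarrow> g \<in> nodes K \<Longrightarrow> x \<in> reach K h
     \<Longrightarrow> nrm nn K x \<subseteq> nrm_region nn K g"
  using assms(1)
proof (induction arbitrary: h g x rule: pt.induct)
  case (pt_sub H G u)
  have "u \<in> set (att K g)" using pt_sub.hyps(2) pt_sub.prems(2) by simp
  then have ug: "u \<in> reach K g" and un: "u \<in> nodes K"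
    using reach_att[OF pt_sub.prems(4)] assms(2) pt_sub.prems(4) by (auto simp: att_closed_def)
  have su: "sub (fst G) u = sub K u" using pt_sub.prems(2) sub_sub[OF assms(2) pt_sub.prems(4) ug] by simp
  show ?case
  proof (cases "H = sub (fst G) u")
    case True
    then have "h = u" using su pt_sub.prems(1) by (metis sub_simps(1))
    then show ?thesis
      using pt_sub.prems(5) ug nrm_subset_nrm_region by (metis reach_trans)
  next
    case False
    then have "nrm nn K x \<subseteq> nrm_region nn K u" using pt_sub(3) su un pt_sub.prems(1,3,5) by auto
    then show ?thesis using nrm_region_mono[OF ug] by blast
  qed
next
  case (pt_fun H G)
  note hK = pt_fun.prems(3) and gK = pt_fun.prems(4)
  have H: "fst H = fst (sub K h)" "snd H = h" and G: "G = sub K g" using pt_fun.prems(1,2) by auto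
  have "\<forall>v\<in>nrm nn K h. nrm_below nn (sub (fst (sub K h)) v) (sub K g)"
    using pt_fun(3) H G by (simp add: nrm_sub)
  then have nrm_h: "nrm_nodes nn K h \<subseteq> nrm_nodes nn K g"
    by (rule nrm_nodes_subset_if_nrm_below[OF _ assms(2) gK])
  have "x = h \<or> (\<exists>u\<in>set (att K h). x \<in> reach K u)"
    using pt_fun.prems(5) reach_unfold[OF hK] by blast
  then show ?case
  proof (elim disjE bexE)
    assume "x = h"
    have "nrm nn K h \<subseteq> nrm_nodes nn K h" by (auto simp: nrm_nodes_def)
    then show ?thesis using \<open>x = h\<close> nrm_h nrm_nodes_subset_nrm_region[OF reach_refl] by blast
  next
    fix u assume u: "u \<in> set (att K h)" and xu: "x \<in> reach K u"
    have "lab K h \<noteq> None" using pt_fun.hyps(2) H by simp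
    then consider "u \<in> nrm nn K h" | "u \<in> safe nn K h" using u att_eq_nrm_Un_safe[of K h nn] by blast
    then show ?thesis
    proof cases
      case 1
      then have "x \<in> reach K g"
        using xu nrm_h nrm_nodes_subset_reach[OF gK] by (auto simp: nrm_nodes_def)
      then show ?thesis by (rule nrm_subset_nrm_region)
    next
      case 2
      have uh: "u \<in> reach K h" and un: "u \<in> nodes K"
        using u reach_att[OF hK] hK assms(2) by (auto simp: att_closed_def)
      have "u \<in> safe nn (fst H) (snd H)" using 2 H by (simp add: safe_sub)
      then have IH: "\<forall>h g x. sub (fst H) u = sub K h \<longrightarrow> G = sub K g \<longrightarrow> h \<in> nodes K
          \<longrightarrow> g \<in> nodes K \<longrightarrow> x \<in> reach K h \<longrightarrow> nrm nn K x \<subseteq> nrm_region nn K g"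
        using pt_fun(4) by blast
      have "sub (fst H) u = sub K u" using H sub_sub[OF assms(2) hK uh] by simp
      from IH[rule_format, OF this G un gK xu] show ?thesis .
    qed
  qed
qed

section \<open>The interpretation as a sum over non-constructor nodes\<close>

definition nrm_args_constr :: "'f set \<Rightarrow> ('f \<Rightarrow> nat) \<Rightarrow> 'f lg \<Rightarrow> bool" where
  "nrm_args_constr Cs nn G \<longleftrightarrow> (\<forall>v\<in>nodes G. \<forall>w\<in>nrm nn G v. constr_tg Cs (sub G w))"

lemma non_constr_in_SP:
  assumes tg: "is_tg ar (G, \<rho>)" and nac: "nrm_args_constr Cs nn G" and x: "x \<in> nodes G"
    and nc: "\<not> constr_tg Cs (sub G x)"
  shows "x \<in> SP nn (G, \<rho>)"
proof -
  have wf: "wf_lg ar G" and "nodes G = reach G \<rho>" using tg by (auto simp: is_tg_def)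
  then have "(\<rho>, x) \<in> (edges G)\<^sup>*" using x by (simp add: reach_def)
  then have "\<not> constr_tg Cs (sub G x) \<longrightarrow> (\<rho>, x) \<in> (safe_edges nn G)\<^sup>*"
  proof induction
    case (step y z)
    show ?case
    proof
      assume ncz: "\<not> constr_tg Cs (sub G z)"
      have yn: "y \<in> nodes G" and zy: "z \<in> set (att G y)" using step.hyps(2) by (auto simp: edges_iff)
      have "\<not> constr_tg Cs (sub G y)"
        using ncz constr_tg_sub_mono reach_att[OF yn zy] by blast
      then have "(\<rho>, y) \<in> (safe_edges nn G)\<^sup>*" using step.IH by blast
      moreover have "z \<in> nrm nn G y \<union> safe nn G y"
        using att_eq_nrm_Un_safe wf_lg_labeled_if_att[OF wf yn zy] zy by metis
      then have "(y, z) \<in> safe_edges nn G"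
        using nac yn ncz by (auto simp: nrm_args_constr_def safe_edges_def)
      ultimately show "(\<rho>, z) \<in> (safe_edges nn G)\<^sup>*" by (rule rtrancl_into_rtrancl)
    qed
  qed simp
  then show ?thesis using nc by (simp add: SP_def)
qed

lemma SP_subset_nodes:
  assumes "att_closed G" "\<rho> \<in> nodes G"
  shows "SP nn (G, \<rho>) \<subseteq> nodes G"
proof
  fix v assume "v \<in> SP nn (G, \<rho>)"
  then have "(\<rho>, v) \<in> (safe_edges nn G)\<^sup>*" by (simp add: SP_def)
  then show "v \<in> nodes G"
  proof induction
    case (step y z)
    then show ?case using assms(1) safe_subset_att[of nn G y] by (auto simp: safe_edges_def att_closed_def)
  qed (rule assms(2))
qed

lemma pi_eq_sum_non_constr:
  assumes "is_tg ar (G, \<rho>)" "nrm_args_constr Cs nn G"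
  shows "pi Cs rk nn ell (G, \<rho>) = (\<Sum>x\<in>{x\<in>nodes G. \<not> constr_tg Cs (sub G x)}. pj rk nn ell (sub G x))"
proof -
  have "att_closed G" "\<rho> \<in> nodes G" using assms(1) wf_lg_att_closed by (auto simp: is_tg_def)
  then have "{v\<in>SP nn (G, \<rho>). \<not> constr_tg Cs (sub G v)} = {x\<in>nodes G. \<not> constr_tg Cs (sub G x)}"
    using SP_subset_nodes non_constr_in_SP[OF assms] by blast
  then show ?thesis by (simp add: pi_def)
qed

lemma pi_le_sum_non_constr:
  assumes "att_closed G" "\<rho> \<in> nodes G" "finite (nodes G)"
  shows "pi Cs rk nn ell (G, \<rho>) \<le> (\<Sum>x\<in>{x\<in>nodes G. \<not> constr_tg Cs (sub G x)}. pj rk nn ell (sub G x))"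
  unfolding pi_def fst_conv using SP_subset_nodes[OF assms(1,2)] assms(3)
  by (intro sum_mono2) auto

lemma pi_sub_le:
  assumes "att_closed G" "\<rho> \<in> nodes G" "finite (nodes G)"
  shows "pi Cs rk nn ell (sub G \<rho>) \<le> (\<Sum>x\<in>{x\<in>reach G \<rho>. \<not> constr_tg Cs (sub G x)}. pj rk nn ell (sub G x))"
proof -
  let ?H = "fst (sub G \<rho>)"
  have sub_H: "sub ?H x = sub G x" if "x \<in> reach G \<rho>" for x
    using sub_sub[OF assms(1,2) that] .
  have "pi Cs rk nn ell (?H, \<rho>)
      \<le> (\<Sum>x\<in>{x\<in>nodes ?H. \<not> constr_tg Cs (sub ?H x)}. pj rk nn ell (sub ?H x))"
  proof (rule pi_le_sum_non_constr[OF att_closed_sub[OF assms(1,2)]])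
    show "finite (nodes ?H)" using finite_subset[OF reach_subset_nodes[OF assms(1,2)] assms(3)] by simp
  qed simp
  also have "{x\<in>nodes ?H. \<not> constr_tg Cs (sub ?H x)} = {x\<in>reach G \<rho>. \<not> constr_tg Cs (sub G x)}"
    using sub_H by auto
  also have "(\<Sum>x\<in>{x\<in>reach G \<rho>. \<not> constr_tg Cs (sub G x)}. pj rk nn ell (sub ?H x))
      = (\<Sum>x\<in>{x\<in>reach G \<rho>. \<not> constr_tg Cs (sub G x)}. pj rk nn ell (sub G x))"
    using sub_H by (intro sum.cong) auto
  finally show ?thesis by (simp add: sub_def)
qed

lemma pj_sub:
  assumes "att_closed G" "x \<in> nodes G"
  shows "pj rk nn ell (sub G x) = (1 + ell) ^ (2 * rk (the (lab G x)))
      * (1 + (\<Sum>u\<in>nrm nn G x. depth (sub G u)))"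
proof -
  have "(\<Sum>u\<in>nrm nn G x. depth (sub (fst (sub G x)) u)) = (\<Sum>u\<in>nrm nn G x. depth (sub G u))"
  proof (rule sum.cong)
    fix u assume "u \<in> nrm nn G x"
    then have "u \<in> reach G x" using nrm_subset_att reach_att[OF assms(2)] by blast
    then show "depth (sub (fst (sub G x)) u) = depth (sub G u)" by (simp add: sub_sub[OF assms])
  qed simp
  then show ?thesis by (simp add: pj_def nrm_sub)
qed

lemma new_nodes_weight_lt:
  fixes ell d D k n :: nat
  assumes "0 < ell" "d \<le> ell" "1 \<le> k" "n \<le> 1 + ell"
  shows "n * ((1 + ell) ^ (2 * k - 2) * (1 + d * D)) < (1 + ell) ^ (2 * k) * (1 + D)"
proof -
  define m where "m = 2 * k - 2"
  have k: "2 * k = Suc (Suc m)" using assms(3) by (simp add: m_def)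
  have "n * ((1 + ell) ^ m * (1 + d * D)) \<le> (1 + ell) * ((1 + ell) ^ m * (1 + d * D))"
    using assms(4) by (rule mult_right_mono) simp
  also have "\<dots> = (1 + ell) ^ Suc m * (1 + d * D)" by (simp only: power_Suc mult.assoc)
  also have "\<dots> < (1 + ell) ^ Suc m * ((1 + ell) * (1 + D))"
  proof (rule mult_strict_left_mono)
    have "d * D \<le> ell * D" using assms(2) by simp
    moreover have "(1 + ell) * (1 + D) = 1 + ell + ell * D + D" by (simp add: algebra_simps)
    ultimately show "1 + d * D < (1 + ell) * (1 + D)" using assms(1) by linarith
  qed simp
  also have "\<dots> = (1 + ell) ^ Suc (Suc m) * (1 + D)" by (simp only: power_Suc2 mult.assoc)
  finally show ?thesis by (simp add: k)
qed

section \<open>Invariants of reductions from basic term graphs\<close>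

definition nrm_terms_in :: "'f trm set \<Rightarrow> ('f \<Rightarrow> nat) \<Rightarrow> 'f lg \<Rightarrow> bool" where
  "nrm_terms_in T nn G \<longleftrightarrow> (\<forall>v\<in>nodes G. \<forall>w\<in>nrm nn G v. \<forall>x\<in>reach G w. \<forall>t. repr G x t \<longrightarrow> t \<in> T)"

definition nrm_terms :: "('f \<Rightarrow> nat) \<Rightarrow> 'f tg \<Rightarrow> 'f trm set" where
  "nrm_terms nn T = {t. \<exists>x\<in>nrm_nodes nn (fst T) (snd T). repr (fst T) x t}"

lemma card_nrm_terms_le:
  assumes "is_tg ar T"
  shows "finite (nrm_terms nn T)" and "card (nrm_terms nn T) \<le> card (nrm_nodes nn (fst T) (snd T))"
proof -
  let ?N = "nrm_nodes nn (fst T) (snd T)"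
  have "att_closed (fst T)" "snd T \<in> nodes (fst T)" "finite (nodes (fst T))"
    using assms wf_lg_att_closed by (auto simp: is_tg_def wf_lg_def)
  then have "?N \<subseteq> nodes (fst T)"
    using nrm_nodes_subset_reach reach_subset_nodes by blast
  then have fin: "finite ?N" using \<open>finite (nodes (fst T))\<close> finite_subset by blast
  have sub: "nrm_terms nn T \<subseteq> (\<lambda>x. THE t. repr (fst T) x t) ` ?N"
  proof
    fix t assume "t \<in> nrm_terms nn T"
    then obtain x where x: "x \<in> ?N" "repr (fst T) x t" by (auto simp: nrm_terms_def)
    then have "(THE t. repr (fst T) x t) = t" using repr_unique by blast
    then show "t \<in> (\<lambda>x. THE t. repr (fst T) x t) ` ?N" using x(1) by (metis imageI)
  qed
  show "finite (nrm_terms nn T)" using finite_subset[OF sub] fin by blast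
  have "card (nrm_terms nn T) \<le> card ((\<lambda>x. THE t. repr (fst T) x t) ` ?N)"
    using card_mono[OF _ sub] fin by blast
  also have "\<dots> \<le> card ?N" using card_image_le[OF fin] .
  finally show "card (nrm_terms nn T) \<le> card ?N" .
qed

text \<open>In a basic term graph only the root has normal arguments.\<close>
lemma basic_tg_invariants:
  assumes sep: "separation ar Cs nn" and tg: "is_tg ar T" and basic: "basic_tg Cs T"
  shows "nrm_args_constr Cs nn (fst T)" and "nrm_terms_in (nrm_terms nn T) nn (fst T)"
proof -
  obtain G \<rho> where T: "T = (G, \<rho>)" by (cases T)
  have root: "\<rho> \<in> nodes G" and nodes: "nodes G = reach G \<rho>" using tg T by (auto simp: is_tg_def)
  have args: "\<forall>v\<in>set (att G \<rho>). constr_tg Cs (sub G v)" using basic T by (simp add: basic_tg_def)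
  have only_root: "v = \<rho>" if "v \<in> nodes G" "w \<in> nrm nn G v" for v w
  proof (rule ccontr)
    assume "v \<noteq> \<rho>"
    then have "v \<in> (\<Union>u\<in>set (att G \<rho>). reach G u)"
      using that(1) reach_unfold[OF root] nodes by simp
    then obtain u where "u \<in> set (att G \<rho>)" "v \<in> reach G u" by blast
    then have "\<forall>g. lab G v = Some g \<longrightarrow> g \<in> Cs" using args by (simp add: constr_tg_sub_iff)
    then show False using nrm_eq_empty_if_constr[OF sep] that(2) by blast
  qed
  show "nrm_args_constr Cs nn (fst T)"
    unfolding nrm_args_constr_def T fst_conv
  proof (intro ballI)
    fix v w assume "v \<in> nodes G" "w \<in> nrm nn G v"
    moreover from this have "v = \<rho>" by (rule only_root)
    ultimately show "constr_tg Cs (sub G w)" using args nrm_subset_att[of nn G \<rho>] by blast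
  qed
  show "nrm_terms_in (nrm_terms nn T) nn (fst T)"
    unfolding nrm_terms_in_def T fst_conv
  proof (intro ballI allI impI)
    fix v w x t assume "v \<in> nodes G" "w \<in> nrm nn G v" "x \<in> reach G w" "repr G x t"
    moreover from this(1,2) have "v = \<rho>" by (rule only_root)
    ultimately show "t \<in> nrm_terms nn (G, \<rho>)" by (auto simp: nrm_terms_def nrm_nodes_def)
  qed
qed

section \<open>A single rewrite step\<close>

locale rewrite_step =
  fixes ar :: "'f \<Rightarrow> nat" and Cs :: "'f set" and nn :: "'f \<Rightarrow> nat"
    and prec :: "'f \<Rightarrow> 'f \<Rightarrow> bool" and rk :: "'f \<Rightarrow> nat"
    and K :: "'f lg" and l r :: nat and G :: "'f lg" and \<rho> :: nat and \<phi> c :: "nat \<Rightarrow> nat"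
  assumes tg: "is_tg ar (G, \<rho>)"
    and rule: "constructor_rule ar Cs (K, l, r)"
    and sep: "separation ar Cs nn"
    and prec: "precedence Cs prec rk"
    and pt: "pt nn prec (sub K r) (sub K l)"
    and hom: "hom (sub K l) G \<phi>"
    and inj_c: "inj_on c (labeled_nodes (sub K r))"
    and fresh: "c ` labeled_nodes (sub K r) \<inter> nodes G = {}"
begin

definition copied :: "nat set" where "copied = labeled_nodes (sub K r)"

definition inst :: "nat \<Rightarrow> nat" where "inst v = (if v \<in> copied then c v else \<phi> v)"

definition redir :: "nat \<Rightarrow> nat" where "redir x = (if x = \<phi> l then inst r else x)"

text \<open>The graph after building and redirection; the step result is its sub-term graph at
  \<open>redir \<rho>\<close>, which performs the garbage collection.\<close>
definition Gr :: "'f lg" where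
  "Gr = \<lparr>nodes = nodes G \<union> c ` copied,
         lab = (\<lambda>w. if w \<in> c ` copied then lab K (inv_into copied c w) else lab G w),
         att = (\<lambda>w. map redir (if w \<in> c ` copied then map inst (att K (inv_into copied c w)) else att G w))\<rparr>"

lemma rewrite_result_eq: "rewrite_result (G, \<rho>) K l r \<phi> c = sub Gr (redir \<rho>)"
  unfolding rewrite_result_def Let_def fst_conv snd_conv Gr_def redir_def[abs_def] inst_def[abs_def] copied_def
  by simp

lemma K_wf: "wf_lg ar K" and l_in_K: "l \<in> nodes K" and r_in_K: "r \<in> nodes K" and l_neq_r: "l \<noteq> r"
  and rhs_vars_in_lhs: "\<forall>v\<in>reach K r. lab K v = None \<longrightarrow> v \<in> reach K l"
  using rule by (auto simp: constructor_rule_def is_rule_def)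

lemma K_closed: "att_closed K" and K_finite: "finite (nodes K)" and K_acyclic: "acyclic (edges K)"
  using K_wf wf_lg_att_closed by (auto simp: wf_lg_def)

lemma G_wf: "wf_lg ar G" and root_in_G: "\<rho> \<in> nodes G"
  using tg by (auto simp: is_tg_def)

lemma G_closed: "att_closed G" and G_finite: "finite (nodes G)" and G_acyclic: "acyclic (edges G)"
  using G_wf wf_lg_att_closed by (auto simp: wf_lg_def)

lemma lhs_in_K: "v \<in> reach K l \<Longrightarrow> v \<in> nodes K"
  using reach_subset_nodes[OF K_closed l_in_K] by blast

lemma rhs_in_K: "v \<in> reach K r \<Longrightarrow> v \<in> nodes K"
  using reach_subset_nodes[OF K_closed r_in_K] by blast

definition f :: 'f where "f = the (lab K l)"

lemma lab_l: "lab K l = Some f" and f_not_constr: "f \<notin> Cs"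
  and lhs_args_constr: "\<forall>v\<in>set (att K l). constr_tg Cs (sub K v)"
proof -
  have basic: "basic_tg Cs (sub K l)" using rule by (auto simp: constructor_rule_def)
  then show "lab K l = Some f" "f \<notin> Cs" by (auto simp: basic_tg_def f_def)
  show "\<forall>v\<in>set (att K l). constr_tg Cs (sub K v)"
    using basic sub_sub[OF K_closed l_in_K] reach_att[OF l_in_K] by (simp add: basic_tg_def)
qed

lemma hom_nodes: "v \<in> reach K l \<Longrightarrow> \<phi> v \<in> nodes G"
  and hom_lab_att: "v \<in> reach K l \<Longrightarrow> lab K v \<noteq> None
    \<Longrightarrow> lab G (\<phi> v) = lab K v \<and> att G (\<phi> v) = map \<phi> (att K v)"
  using hom by (auto simp: hom_def)

lemma redex_in_G: "\<phi> l \<in> nodes G"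
  using hom_nodes[OF reach_refl] .

lemma lab_redex: "lab G (\<phi> l) = Some f" and att_redex: "att G (\<phi> l) = map \<phi> (att K l)"
  using hom_lab_att[OF reach_refl] lab_l by auto

lemma hom_edge:
  assumes "a \<in> reach K l" "(a, b) \<in> edges K"
  shows "(\<phi> a, \<phi> b) \<in> edges G \<and> b \<in> reach K l"
proof -
  have an: "a \<in> nodes K" and b: "b \<in> set (att K a)" using assms(2) by (auto simp: edges_iff)
  then have "att G (\<phi> a) = map \<phi> (att K a)"
    using hom_lab_att[OF assms(1)] wf_lg_labeled_if_att[OF K_wf] by blast
  then show ?thesis using b hom_nodes[OF assms(1)] reach_att_trans[OF assms(1) an b] by (auto simp: edges_iff)
qed

lemma hom_rtrancl:
  assumes "y \<in> reach K l" "(y, z) \<in> (edges K)\<^sup>*"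
  shows "(\<phi> y, \<phi> z) \<in> (edges G)\<^sup>* \<and> z \<in> reach K l"
  using assms(2)
proof induction
  case (step a b)
  then have "(\<phi> a, \<phi> b) \<in> edges G" "b \<in> reach K l" using hom_edge by blast+
  then show ?case using step.IH by (meson rtrancl_into_rtrancl)
qed (use assms(1) in simp)

lemma hom_reach: "y \<in> reach K l \<Longrightarrow> z \<in> reach K y \<Longrightarrow> \<phi> z \<in> reach G (\<phi> y)"
  using hom_rtrancl by (auto simp: reach_def)

lemma hom_strictly_below_redex:
  assumes z: "z \<in> reach K l" "z \<noteq> l"
  shows "\<phi> z \<noteq> \<phi> l" "\<phi> l \<notin> reach G (\<phi> z)"
proof -
  have "(l, z) \<in> (edges K)\<^sup>+" using z by (auto simp: reach_def dest: rtranclD)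
  then obtain a where la: "(l, a) \<in> edges K" and az: "(a, z) \<in> (edges K)\<^sup>*" by (auto dest: tranclD)
  have "(\<phi> l, \<phi> a) \<in> edges G" "a \<in> reach K l" using hom_edge[OF reach_refl la] by auto
  moreover from this(2) have "(\<phi> a, \<phi> z) \<in> (edges G)\<^sup>*" using hom_rtrancl az by blast
  ultimately have t: "(\<phi> l, \<phi> z) \<in> (edges G)\<^sup>+" by auto
  then show "\<phi> z \<noteq> \<phi> l" using G_acyclic by (auto simp: acyclic_def)
  show "\<phi> l \<notin> reach G (\<phi> z)"
    using t G_acyclic by (auto simp: acyclic_def reach_def dest: trancl_rtrancl_trancl)
qed

lemma copied_iff: "v \<in> copied \<longleftrightarrow> v \<in> reach K r \<and> lab K v \<noteq> None"
  by (simp add: copied_def labeled_nodes_def)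

lemma finite_copied: "finite copied"
  using finite_subset[OF _ K_finite] rhs_in_K copied_iff by blast

lemma c_notin_G: "v \<in> copied \<Longrightarrow> c v \<notin> nodes G"
  using fresh by (auto simp: copied_def)

lemma inv_into_c: "v \<in> copied \<Longrightarrow> inv_into copied c (c v) = v"
  using inj_c by (simp add: copied_def inv_into_f_f)

lemma nodes_Gr: "nodes Gr = nodes G \<union> c ` copied"
  by (simp add: Gr_def)

lemma lab_Gr_copy: "v \<in> copied \<Longrightarrow> lab Gr (c v) = lab K v"
  and att_Gr_copy: "v \<in> copied \<Longrightarrow> att Gr (c v) = map redir (map inst (att K v))"
  by (simp_all add: Gr_def inv_into_c)

lemma lab_Gr_old: "w \<in> nodes G \<Longrightarrow> lab Gr w = lab G w"
  and att_Gr_old: "w \<in> nodes G \<Longrightarrow> att Gr w = map redir (att G w)"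
  using c_notin_G by (auto simp: Gr_def)

lemma c_neq_redex: "v \<in> copied \<Longrightarrow> c v \<noteq> \<phi> l"
  using c_notin_G redex_in_G by metis

lemma inst_r: "inst r \<noteq> \<phi> l \<and> inst r \<in> nodes Gr"
proof (cases "r \<in> copied")
  case True
  then show ?thesis using c_neq_redex by (auto simp: inst_def nodes_Gr)
next
  case False
  then have "r \<in> reach K l" using copied_iff rhs_vars_in_lhs by auto
  then show ?thesis
    using False hom_strictly_below_redex(1) l_neq_r hom_nodes by (auto simp: inst_def nodes_Gr)
qed

lemma redir_neq_redex: "redir x \<noteq> \<phi> l"
  using inst_r by (simp add: redir_def)

lemma redir_id: "x \<noteq> \<phi> l \<Longrightarrow> redir x = x"
  by (simp add: redir_def)

lemma redir_in_Gr: "x \<in> nodes Gr \<Longrightarrow> redir x \<in> nodes Gr"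
  using inst_r by (simp add: redir_def)

lemma inst_in_Gr: "v \<in> reach K r \<Longrightarrow> inst v \<in> nodes Gr"
  using copied_iff rhs_vars_in_lhs hom_nodes by (auto simp: inst_def nodes_Gr)

lemma Gr_closed: "att_closed Gr"
  unfolding att_closed_def
proof
  fix w assume w: "w \<in> nodes Gr"
  show "set (att Gr w) \<subseteq> nodes Gr"
  proof (cases "w \<in> c ` copied")
    case True
    then obtain y where y: "y \<in> copied" "w = c y" by blast
    then have "y \<in> reach K r" using copied_iff by blast
    then have "\<forall>v\<in>set (att K y). inst v \<in> nodes Gr"
      using inst_in_Gr reach_att_trans rhs_in_K by blast
    then show ?thesis using y att_Gr_copy redir_in_Gr by auto
  next
    case False
    then have "w \<in> nodes G" using w nodes_Gr by auto
    then show ?thesis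
      using G_closed att_Gr_old redir_in_Gr nodes_Gr by (auto simp: att_closed_def)
  qed
qed

lemma Gr_finite: "finite (nodes Gr)"
  using G_finite finite_copied by (simp add: nodes_Gr)

lemma redir_root_in_Gr: "redir \<rho> \<in> nodes Gr"
  using redir_in_Gr root_in_G nodes_Gr by auto

lemma redex_notin_result: "\<phi> l \<notin> reach Gr (redir \<rho>)"
proof
  assume "\<phi> l \<in> reach Gr (redir \<rho>)"
  then have "(redir \<rho>, \<phi> l) \<in> (edges Gr)\<^sup>*" by (simp add: reach_def)
  then show False
  proof (cases rule: rtranclE)
    case (step y)
    then have "\<phi> l \<in> set (att Gr y)" by (simp add: edges_iff)
    then show False by (auto simp: Gr_def) (metis redir_neq_redex)
  qed (use redir_neq_redex in metis)
qed

lemma Gr_agree_below: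
  assumes x: "x \<in> nodes G" and not_redex: "\<phi> l \<notin> reach G x"
  shows "\<forall>z\<in>reach G x. lab Gr z = lab G z \<and> att Gr z = att G z"
    and "reach Gr x = reach G x" and "sub Gr x = sub G x"
proof -
  show agree: "\<forall>z\<in>reach G x. lab Gr z = lab G z \<and> att Gr z = att G z"
  proof
    fix z assume z: "z \<in> reach G x"
    have zn: "z \<in> nodes G" using z reach_subset_nodes[OF G_closed x] by blast
    have "\<forall>y\<in>set (att G z). redir y = y"
      using reach_att_trans[OF z zn] not_redex redir_id by metis
    then show "lab Gr z = lab G z \<and> att Gr z = att G z"
      using lab_Gr_old[OF zn] att_Gr_old[OF zn] by (simp add: map_idI)
  qed
  then show reach_eq: "reach Gr x = reach G x"
    using reach_agree[OF G_closed x] reach_subset_nodes[OF G_closed x] nodes_Gr by blast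
  show "sub Gr x = sub G x" using sub_agree[OF reach_eq] agree by blast
qed

definition proj :: "nat \<Rightarrow> nat" where
  "proj x = (if x \<in> c ` copied then \<phi> (inv_into copied c x) else x)"

definition copy_dom :: "nat \<Rightarrow> nat set" where
  "copy_dom u = c ` (copied \<inter> reach K u) \<union> reach G (\<phi> u)"

lemma proj_copy: "v \<in> copied \<Longrightarrow> proj (c v) = \<phi> v"
  by (simp add: proj_def inv_into_c)

lemma proj_old: "w \<in> nodes G \<Longrightarrow> proj w = w"
  using c_notin_G by (auto simp: proj_def)

lemma proj_redir_inst:
  assumes u: "u \<in> reach K l" "u \<noteq> l" and v: "v \<in> reach K u"
  shows "proj (redir (inst v)) = \<phi> v \<and> redir (inst v) \<in> copy_dom u"
proof -
  have vl: "v \<in> reach K l" using reach_trans[OF u(1) v] .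
  have "v \<noteq> l" using reach_antisym[OF K_acyclic] u v by (metis reach_trans reach_refl)
  then have "\<phi> v \<noteq> \<phi> l" using hom_strictly_below_redex(1)[OF vl] by blast
  then show ?thesis
    using v c_neq_redex proj_copy proj_old hom_nodes[OF vl] hom_reach[OF u(1) v]
    by (auto simp: inst_def redir_id copy_dom_def)
qed

text \<open>Transfers depths, term representations and labels from the copies back to \<open>G\<close>.\<close>
lemma morph_on_copy_dom:
  assumes u: "u \<in> reach K l" "u \<noteq> l"
  shows "morph_on (copy_dom u) proj Gr G" and "\<forall>x\<in>copy_dom u. lab Gr x = None \<longrightarrow> proj x = x"
    and "\<forall>x\<in>copy_dom u. proj x \<in> reach G (\<phi> u)"
proof -
  have "x \<in> nodes Gr \<and> proj x \<in> nodes G \<and> lab Gr x = lab G (proj x)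
      \<and> att G (proj x) = map proj (att Gr x) \<and> set (att Gr x) \<subseteq> copy_dom u
      \<and> (lab Gr x = None \<longrightarrow> proj x = x) \<and> proj x \<in> reach G (\<phi> u)" if x: "x \<in> copy_dom u" for x
  proof (cases "x \<in> c ` (copied \<inter> reach K u)")
    case True
    then obtain y where y: "y \<in> copied" "y \<in> reach K u" "x = c y" by blast
    have yl: "y \<in> reach K l" using reach_trans[OF u(1) y(2)] .
    have yn: "y \<in> nodes K" using lhs_in_K[OF yl] .
    have hy: "lab G (\<phi> y) = lab K y" "att G (\<phi> y) = map \<phi> (att K y)"
      using hom_lab_att[OF yl] y(1) copied_iff by auto
    have "\<forall>v\<in>set (att K y). proj (redir (inst v)) = \<phi> v \<and> redir (inst v) \<in> copy_dom u"
      using proj_redir_inst[OF u] reach_att_trans[OF y(2) yn] by blast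
    then show ?thesis
      using y hy lab_Gr_copy att_Gr_copy proj_copy hom_nodes[OF yl] hom_reach[OF u(1) y(2)] copied_iff
      by (auto simp: nodes_Gr)
  next
    case False
    then have xr: "x \<in> reach G (\<phi> u)" using x by (simp add: copy_dom_def)
    have xn: "x \<in> nodes G" using xr reach_subset_nodes[OF G_closed hom_nodes[OF u(1)]] by blast
    have "\<phi> l \<notin> reach G x" using hom_strictly_below_redex(2)[OF u] reach_trans[OF xr] by blast
    note agree = Gr_agree_below[OF xn this]
    have "\<forall>w\<in>set (att G x). w \<in> nodes G \<and> w \<in> reach G (\<phi> u)"
      using reach_att_trans[OF xr xn] G_closed xn by (auto simp: att_closed_def)
    then show ?thesis using agree(1) xn proj_old xr by (auto simp: nodes_Gr copy_dom_def map_idI)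
  qed
  then show "morph_on (copy_dom u) proj Gr G" "\<forall>x\<in>copy_dom u. lab Gr x = None \<longrightarrow> proj x = x"
    "\<forall>x\<in>copy_dom u. proj x \<in> reach G (\<phi> u)"
    by (auto simp: morph_on_def)
qed

lemma nrm_region_lhs: "nrm_region nn K l = nrm_nodes nn K l"
proof
  show "nrm_nodes nn K l \<subseteq> nrm_region nn K l"
    using nrm_nodes_subset_nrm_region[OF reach_refl] .
  show "nrm_region nn K l \<subseteq> nrm_nodes nn K l"
  proof
    fix x assume "x \<in> nrm_region nn K l"
    then obtain y where y: "y \<in> reach K l" and x: "x \<in> nrm_nodes nn K y"
      by (auto simp: nrm_region_def)
    show "x \<in> nrm_nodes nn K l"
    proof (cases "y = l")
      case False
      then obtain u where "u \<in> set (att K l)" "y \<in> reach K u" using y reach_unfold[OF l_in_K] by blast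
      then have "\<forall>g. lab K y = Some g \<longrightarrow> g \<in> Cs" using lhs_args_constr by (auto simp: constr_tg_sub_iff)
      then have "nrm nn K y = {}" using nrm_eq_empty_if_constr[OF sep] by blast
      then show ?thesis using x by (simp add: nrm_nodes_def)
    qed (use x in simp)
  qed
qed

lemma rhs_nrm_subset: "x \<in> reach K r \<Longrightarrow> nrm nn K x \<subseteq> nrm_nodes nn K l"
  using pt_nrm_subset_nrm_region[OF pt K_closed refl refl r_in_K l_in_K] nrm_region_lhs by simp

lemma rhs_prec: "x \<in> reach K r \<Longrightarrow> lab K x = Some g \<Longrightarrow> prec g f"
  using pt_lab_below[OF pt] lab_l by (auto simp: lab_below_def)

lemma lhs_nrm_nodes_below:
  assumes "u \<in> nrm_nodes nn K l"
  shows "u \<in> reach K l" "u \<noteq> l"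
proof -
  obtain w where w: "w \<in> nrm nn K l" "u \<in> reach K w" using assms by (auto simp: nrm_nodes_def)
  have wa: "w \<in> set (att K l)" using w(1) nrm_subset_att by blast
  show "u \<in> reach K l" using reach_trans[OF reach_att[OF l_in_K wa] w(2)] .
  have "(l, w) \<in> edges K" using wa l_in_K by (simp add: edges_iff)
  then show "u \<noteq> l" using w(2) K_acyclic unfolding reach_def acyclic_def
    by (metis mem_Collect_eq r_into_trancl rtrancl_trancl_trancl)
qed

lemma nrm_redex: "nrm nn G (\<phi> l) = \<phi> ` nrm nn K l"
  using lab_redex att_redex lab_l by (simp add: nrm_def take_map)

lemma hom_lhs_nrm_nodes: "u \<in> nrm_nodes nn K l \<Longrightarrow> \<exists>w'\<in>nrm nn G (\<phi> l). \<phi> u \<in> reach G w'"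
  using hom_reach nrm_subset_att reach_att[OF l_in_K] nrm_redex
  by (fastforce simp: nrm_nodes_def)

lemma redex_notin_constr: "constr_tg Cs (sub G w) \<Longrightarrow> \<phi> l \<notin> reach G w"
  using lab_redex f_not_constr unfolding constr_tg_sub_iff by blast

lemma nrm_Gr_copy: "y \<in> copied \<Longrightarrow> nrm nn Gr (c y) = (\<lambda>u. redir (inst u)) ` nrm nn K y"
  using lab_Gr_copy att_Gr_copy by (simp add: nrm_def take_map image_image split: option.splits)

definition lhs_var_args :: "nat set" where
  "lhs_var_args = {v\<in>nrm nn K l. lab K v = None}"

definition lhs_safe_nodes :: "nat set" where
  "lhs_safe_nodes = (\<Union>v\<in>safe nn K l. reach K v)"

definition lhs_ground_nodes :: "nat set" where
  "lhs_ground_nodes = (\<Union>v\<in>{v\<in>nrm nn K l. lab K v \<noteq> None}. reach K v)"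

lemma lhs_args_in_K: "u \<in> set (att K l) \<Longrightarrow> u \<in> reach K l \<and> u \<in> nodes K"
  using reach_att[OF l_in_K, of u] lhs_in_K[of u] by simp

lemma lhs_parts_in_K:
  "lhs_var_args \<subseteq> nodes K" "lhs_safe_nodes \<subseteq> nodes K" "lhs_ground_nodes \<subseteq> nodes K"
proof -
  have arg: "reach K v \<subseteq> nodes K" if "v \<in> set (att K l)" for v
    using lhs_args_in_K[OF that] reach_subset_nodes[OF K_closed] by blast
  show "lhs_var_args \<subseteq> nodes K"
    using lhs_args_in_K nrm_subset_att[of nn K l] by (auto simp: lhs_var_args_def)
  show "lhs_safe_nodes \<subseteq> nodes K"
    using arg safe_subset_att[of nn K l] by (auto simp: lhs_safe_nodes_def)
  show "lhs_ground_nodes \<subseteq> nodes K"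
    using arg nrm_subset_att[of nn K l] by (auto simp: lhs_ground_nodes_def)
qed

lemma nrm_nodes_lhs_subset: "nrm_nodes nn K l \<subseteq> lhs_ground_nodes \<union> lhs_var_args"
proof
  fix x assume "x \<in> nrm_nodes nn K l"
  then obtain w where w: "w \<in> nrm nn K l" "x \<in> reach K w" by (auto simp: nrm_nodes_def)
  show "x \<in> lhs_ground_nodes \<union> lhs_var_args"
  proof (cases "lab K w = None")
    case True
    then have "x = w" using reach_unlabeled[OF K_wf] lhs_args_in_K nrm_subset_att w by blast
    then show ?thesis using w(1) True by (simp add: lhs_var_args_def)
  next
    case False
    then show ?thesis using w by (auto simp: lhs_ground_nodes_def)
  qed
qed

lemma reach_lhs_subset: "reach K l \<subseteq> insert l (lhs_ground_nodes \<union> (lhs_var_args \<union> lhs_safe_nodes))"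
proof
  fix x assume "x \<in> reach K l"
  then consider "x = l" | u where "u \<in> set (att K l)" "x \<in> reach K u"
    using reach_unfold[OF l_in_K] by blast
  then show "x \<in> insert l (lhs_ground_nodes \<union> (lhs_var_args \<union> lhs_safe_nodes))"
  proof cases
    case (2 u)
    then consider "u \<in> nrm nn K l" | "u \<in> safe nn K l" using att_eq_nrm_Un_safe[of K l nn] lab_l by auto
    then show ?thesis
    proof cases
      case 1
      then have "x \<in> nrm_nodes nn K l" using 2 by (auto simp: nrm_nodes_def)
      then show ?thesis using nrm_nodes_lhs_subset by blast
    qed (use 2 in \<open>auto simp: lhs_safe_nodes_def\<close>)
  qed simp
qed

lemma nrm_nodes_rhs_subset: "nrm_nodes nn K r \<subseteq> lhs_ground_nodes \<union> lhs_var_args"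
proof
  fix x assume "x \<in> nrm_nodes nn K r"
  then obtain v where "v \<in> nrm nn K r" "x \<in> reach K v" by (auto simp: nrm_nodes_def)
  then have "x \<in> nrm_nodes nn K l"
    using rhs_nrm_subset[OF reach_refl] reach_subset_nrm_nodes by blast
  then show "x \<in> lhs_ground_nodes \<union> lhs_var_args" using nrm_nodes_lhs_subset by blast
qed

lemma cap_nrm_lhs_agree:
  assumes x: "x \<in> lhs_ground_nodes"
  shows "x \<in> nodes (fst (cap_nrm nn (sub K l))) \<and> lab (fst (cap_nrm nn (sub K l))) x = lab K x
    \<and> att (fst (cap_nrm nn (sub K l))) x = att K x"
proof -
  obtain v where v: "v \<in> nrm nn K l" "x \<in> reach K v" using x by (auto simp: lhs_ground_nodes_def)
  then have xl: "x \<in> reach K l" "x \<noteq> l"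
    using lhs_nrm_nodes_below by (auto simp: nrm_nodes_def)
  have vr: "v \<in> reach K l" using v(1) lhs_args_in_K nrm_subset_att by blast
  have vt: "v \<in> set (take (nn f) (att K l))" using v(1) lab_l by (simp add: nrm_def)
  have fin: "finite (reach K l)" using reach_subset_nodes[OF K_closed l_in_K] K_finite finite_subset by blast
  \<comment> \<open>the fresh unlabeled nodes of \<open>cap_nrm\<close> are numbered above all nodes of \<open>K\<restriction>l\<close>\<close>
  have big: "x < Suc (Max (reach K l)) + i" for i using Max_ge[OF fin xl(1)] by simp
  show ?thesis
    unfolding cap_nrm_def Let_def
    using xl v(2) vt reach_sub[OF K_closed l_in_K vr] big lab_l
    by (auto simp: less_not_refl2 intro: bexI[of _ v])
qed

end

locale rewrite_step_inv = rewrite_step +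
  fixes T
  assumes nrm_constr_G: "nrm_args_constr Cs nn G" and nrm_terms_G: "nrm_terms_in T nn G"
begin

lemma nrm_old:
  assumes v: "v \<in> nodes G" and w: "w \<in> nrm nn G v"
  shows "w \<in> nodes G" and "\<phi> l \<notin> reach G w"
proof -
  show "w \<in> nodes G" using w nrm_subset_att[of nn G v] G_closed v unfolding att_closed_def by blast
  show "\<phi> l \<notin> reach G w" using nrm_constr_G v w redex_notin_constr by (simp add: nrm_args_constr_def)
qed

lemma nrm_Gr_old:
  assumes v: "v \<in> nodes G"
  shows "nrm nn Gr v = nrm nn G v"
proof -
  have "nrm nn Gr v = redir ` nrm nn G v"
    using lab_Gr_old[OF v] att_Gr_old[OF v] by (simp add: nrm_def take_map split: option.splits)
  also have "\<dots> = nrm nn G v"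
  proof -
    have "\<forall>w\<in>nrm nn G v. redir w = w" using nrm_old(2)[OF v] redir_id by (metis reach_refl)
    then show ?thesis by force
  qed
  finally show ?thesis .
qed

lemma nrm_arg_of_copy:
  assumes y: "y \<in> copied" and w: "w \<in> nrm nn Gr (c y)"
  shows "constr_tg Cs (sub Gr w)" and "\<forall>x\<in>reach Gr w. \<forall>t. repr Gr x t \<longrightarrow> t \<in> T"
proof -
  obtain u where u: "u \<in> nrm nn K y" and wu: "w = redir (inst u)" using w nrm_Gr_copy[OF y] by auto
  have "y \<in> reach K r" using y copied_iff by blast
  then have uN: "u \<in> nrm_nodes nn K l" using rhs_nrm_subset u by blast
  note ul = lhs_nrm_nodes_below[OF uN]
  note morph = morph_on_copy_dom[OF ul]
  have pw: "proj w = \<phi> u" "w \<in> copy_dom u" using proj_redir_inst[OF ul reach_refl] wu by auto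
  obtain w' where w': "w' \<in> nrm nn G (\<phi> l)" "\<phi> u \<in> reach G w'" using hom_lhs_nrm_nodes[OF uN] by blast
  have below: "z \<in> copy_dom u \<and> proj z \<in> reach G w'" if "z \<in> reach Gr w" for z
    using morph_on_reach[OF morph(1) pw(2) that] pw(1) reach_trans[OF w'(2)] by auto
  show "constr_tg Cs (sub Gr w)"
    unfolding constr_tg_sub_iff
  proof (intro ballI allI impI)
    fix z g assume z: "z \<in> reach Gr w" and g: "lab Gr z = Some g"
    have "lab G (proj z) = Some g" using below[OF z] morph(1) g by (auto simp: morph_on_def)
    moreover have "constr_tg Cs (sub G w')" using nrm_constr_G redex_in_G w'(1) by (simp add: nrm_args_constr_def)
    ultimately show "g \<in> Cs" using below[OF z] unfolding constr_tg_sub_iff by blast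
  qed
  show "\<forall>x\<in>reach Gr w. \<forall>t. repr Gr x t \<longrightarrow> t \<in> T"
  proof (intro ballI allI impI)
    fix z t assume z: "z \<in> reach Gr w" and t: "repr Gr z t"
    have "repr G (proj z) t" using morph_on_repr[OF morph(1) t _ morph(2)] below[OF z] by blast
    then show "t \<in> T" using nrm_terms_G redex_in_G w'(1) below[OF z] unfolding nrm_terms_in_def by blast
  qed
qed

lemma nrm_arg_of_old:
  assumes v: "v \<in> nodes G" and w: "w \<in> nrm nn Gr v"
  shows "constr_tg Cs (sub Gr w)" and "\<forall>x\<in>reach Gr w. \<forall>t. repr Gr x t \<longrightarrow> t \<in> T"
proof -
  have wG: "w \<in> nrm nn G v" using w nrm_Gr_old[OF v] by simp
  note agree = Gr_agree_below[OF nrm_old[OF v wG]]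
  show "constr_tg Cs (sub Gr w)" using nrm_constr_G v wG agree(3) by (simp add: nrm_args_constr_def)
  show "\<forall>x\<in>reach Gr w. \<forall>t. repr Gr x t \<longrightarrow> t \<in> T"
  proof (intro ballI allI impI)
    fix z t assume z: "z \<in> reach Gr w" and t: "repr Gr z t"
    have zr: "z \<in> reach G w" using z agree(2) by simp
    have "\<forall>x\<in>reach G w. lab G x = lab Gr x \<and> att G x = att Gr x \<and> set (att Gr x) \<subseteq> reach G w"
      using agree(1) att_subset_reach[OF G_closed nrm_old(1)[OF v wG]] by simp
    then have "repr G z t" using repr_agree[OF t zr] by blast
    then show "t \<in> T" using nrm_terms_G v wG zr by (simp add: nrm_terms_in_def)
  qed
qed

lemma nrm_arg_Gr:
  assumes "v \<in> nodes Gr" "w \<in> nrm nn Gr v"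
  shows "constr_tg Cs (sub Gr w)" and "\<forall>x\<in>reach Gr w. \<forall>t. repr Gr x t \<longrightarrow> t \<in> T"
proof -
  have "constr_tg Cs (sub Gr w) \<and> (\<forall>x\<in>reach Gr w. \<forall>t. repr Gr x t \<longrightarrow> t \<in> T)"
  proof (cases "v \<in> nodes G")
    case True
    then show ?thesis using nrm_arg_of_old assms(2) by blast
  next
    case False
    then obtain y where "y \<in> copied" "v = c y" using assms(1) nodes_Gr by auto
    then show ?thesis using nrm_arg_of_copy assms(2) by blast
  qed
  then show "constr_tg Cs (sub Gr w)" "\<forall>x\<in>reach Gr w. \<forall>t. repr Gr x t \<longrightarrow> t \<in> T" by auto
qed

abbreviation H_nodes :: "nat set" where "H_nodes \<equiv> reach Gr (redir \<rho>)"

lemma H_nodes_subset: "H_nodes \<subseteq> nodes Gr"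
  using reach_subset_nodes[OF Gr_closed redir_root_in_Gr] .

lemma result_nrm_args_constr: "nrm_args_constr Cs nn (fst (sub Gr (redir \<rho>)))"
  unfolding nrm_args_constr_def
proof (intro ballI)
  fix v w assume v: "v \<in> nodes (fst (sub Gr (redir \<rho>)))" and w: "w \<in> nrm nn (fst (sub Gr (redir \<rho>))) v"
  have vR: "v \<in> H_nodes" using v by simp
  have w2: "w \<in> nrm nn Gr v" using w nrm_sub[OF vR] by simp
  have "w \<in> H_nodes" using att_subset_reach[OF Gr_closed redir_root_in_Gr vR] w2 nrm_subset_att by blast
  then show "constr_tg Cs (sub (fst (sub Gr (redir \<rho>))) w)"
    using nrm_arg_Gr(1)[OF _ w2] H_nodes_subset vR sub_sub[OF Gr_closed redir_root_in_Gr] by auto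
qed

lemma result_nrm_terms_in: "nrm_terms_in T nn (fst (sub Gr (redir \<rho>)))"
  unfolding nrm_terms_in_def
proof (intro ballI allI impI)
  let ?H = "fst (sub Gr (redir \<rho>))"
  fix v w x t assume v: "v \<in> nodes ?H" and w: "w \<in> nrm nn ?H v" and x: "x \<in> reach ?H w"
    and t: "repr ?H x t"
  have vR: "v \<in> H_nodes" using v by simp
  have w2: "w \<in> nrm nn Gr v" using w nrm_sub[OF vR] by simp
  have wR: "w \<in> H_nodes" using att_subset_reach[OF Gr_closed redir_root_in_Gr vR] w2 nrm_subset_att by blast
  have x2: "x \<in> reach Gr w" using x reach_sub[OF Gr_closed redir_root_in_Gr wR] by simp
  have "\<forall>z\<in>H_nodes. lab Gr z = lab ?H z \<and> att Gr z = att ?H z \<and> set (att ?H z) \<subseteq> H_nodes"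
    using att_subset_reach[OF Gr_closed redir_root_in_Gr] by simp
  then have "repr Gr x t" using repr_agree[OF t reach_trans[OF wR x2]] by blast
  then show "t \<in> T" using nrm_arg_Gr(2)[OF _ w2] H_nodes_subset vR x2 by blast
qed

definition redex_depth :: nat where
  "redex_depth = (\<Sum>w\<in>nrm nn G (\<phi> l). depth (sub G w))"

lemma pj_redex: "pj rk nn ell (sub G (\<phi> l)) = (1 + ell) ^ (2 * rk f) * (1 + redex_depth)"
  using pj_sub[OF G_closed redex_in_G] lab_redex by (simp add: redex_depth_def)

lemma non_constr_redex: "\<not> constr_tg Cs (sub G (\<phi> l))"
  using lab_redex f_not_constr unfolding constr_tg_sub_iff by auto

lemma pj_old:
  assumes x: "x \<in> H_nodes" "x \<notin> c ` copied" and nc: "\<not> constr_tg Cs (sub Gr x)"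
  shows "x \<in> nodes G" "x \<noteq> \<phi> l" "\<not> constr_tg Cs (sub G x)"
    and "pj rk nn ell (sub Gr x) = pj rk nn ell (sub G x)"
proof -
  show xG: "x \<in> nodes G" using x H_nodes_subset nodes_Gr by auto
  show "x \<noteq> \<phi> l" using x(1) redex_notin_result by blast
  show "\<not> constr_tg Cs (sub G x)"
    using nc Gr_agree_below(3)[OF xG] redex_notin_constr by fastforce
  have "\<forall>u\<in>nrm nn G x. depth (sub Gr u) = depth (sub G u)"
    using nrm_old[OF xG] Gr_agree_below(3) by simp
  then show "pj rk nn ell (sub Gr x) = pj rk nn ell (sub G x)"
    using pj_sub[OF Gr_closed] pj_sub[OF G_closed xG] xG nodes_Gr nrm_Gr_old[OF xG] lab_Gr_old[OF xG]
    by simp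
qed

text \<open>By precedence termination the normal arguments of a copy lie below normal arguments of
  \<open>l\<close>, so they are no deeper than the normal arguments of the redex.\<close>
lemma depth_copy_nrm_le:
  assumes y: "y \<in> copied" and u: "u \<in> nrm nn K y"
  shows "depth (sub Gr (redir (inst u))) \<le> redex_depth"
proof -
  have "y \<in> reach K r" using y copied_iff by blast
  then have uN: "u \<in> nrm_nodes nn K l" using rhs_nrm_subset u by blast
  note ul = lhs_nrm_nodes_below[OF uN]
  note pu = proj_redir_inst[OF ul reach_refl]
  obtain w' where w': "w' \<in> nrm nn G (\<phi> l)" "\<phi> u \<in> reach G w'" using hom_lhs_nrm_nodes[OF uN] by blast
  have w'G: "w' \<in> nodes G" using nrm_old(1)[OF redex_in_G w'(1)] .
  have "depth (sub Gr (redir (inst u))) \<le> depth (sub G (proj (redir (inst u))))"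
    using morph_on_depth[OF morph_on_copy_dom(1)[OF ul] _ Gr_closed G_finite G_closed G_acyclic] pu by blast
  also have "\<dots> \<le> depth (sub G w')"
    using depth_sub_mono[OF G_finite G_closed G_acyclic w'G w'(2)] pu by simp
  also have "\<dots> \<le> redex_depth"
    unfolding redex_depth_def using w'(1) finite_nrm by (intro member_le_sum) auto
  finally show ?thesis .
qed

lemma pj_copy_le:
  assumes y: "y \<in> copied" and d_ar: "\<forall>g. ar g \<le> d"
  shows "1 \<le> rk f" and "pj rk nn ell (sub Gr (c y)) \<le> (1 + ell) ^ (2 * rk f - 2) * (1 + d * redex_depth)"
proof -
  obtain g where g: "lab K y = Some g" and yr: "y \<in> reach K r" using y copied_iff by auto
  have rk: "rk g < rk f" using rhs_prec[OF yr g] prec by (simp add: precedence_def)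
  then show "1 \<le> rk f" by simp
  have "card (nrm nn K y) \<le> d"
  proof -
    have "card (nrm nn K y) \<le> length (att K y)" using card_length[of "take (nn g) (att K y)"]
      by (simp add: nrm_def g)
    also have "\<dots> \<le> d" using K_wf rhs_in_K[OF yr] g d_ar by (auto simp: wf_lg_def)
    finally show ?thesis .
  qed
  have "(\<Sum>u\<in>nrm nn Gr (c y). depth (sub Gr u)) \<le> (\<Sum>u\<in>nrm nn K y. depth (sub Gr (redir (inst u))))"
    unfolding nrm_Gr_copy[OF y]
    using sum_image_le[where I = "nrm nn K y" and f = "\<lambda>u. redir (inst u)" and g = "\<lambda>u. depth (sub Gr u)"]
    by (simp add: comp_def finite_nrm)
  also have "\<dots> \<le> card (nrm nn K y) * redex_depth"
    using sum_bounded_above[of "nrm nn K y" "\<lambda>u. depth (sub Gr (redir (inst u)))" redex_depth]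
      depth_copy_nrm_le[OF y] by simp
  also have "\<dots> \<le> d * redex_depth" using \<open>card (nrm nn K y) \<le> d\<close> by (rule mult_right_mono) simp
  finally have depths: "(\<Sum>u\<in>nrm nn Gr (c y). depth (sub Gr u)) \<le> d * redex_depth" .
  have "(1 + ell) ^ (2 * rk g) \<le> (1 + ell) ^ (2 * rk f - 2)"
    using rk by (intro power_increasing) auto
  from mult_mono[OF this add_left_mono[OF depths, of 1]]
  show "pj rk nn ell (sub Gr (c y)) \<le> (1 + ell) ^ (2 * rk f - 2) * (1 + d * redex_depth)"
    using pj_sub[OF Gr_closed] lab_Gr_copy[OF y] g y nodes_Gr by simp
qed

lemma copies_weight_lt:
  assumes "0 < ell" "\<forall>g. ar g \<le> d" "d \<le> ell" "card (reach K r) \<le> 1 + ell"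
  shows "(\<Sum>x\<in>{x\<in>H_nodes. \<not> constr_tg Cs (sub Gr x)} \<inter> c ` copied. pj rk nn ell (sub Gr x))
    < pj rk nn ell (sub G (\<phi> l))"
    (is "(\<Sum>x\<in>?N. _) < _")
proof (cases "?N = {}")
  case True
  then show ?thesis using pj_redex by simp
next
  case False
  let ?B = "(1 + ell) ^ (2 * rk f - 2) * (1 + d * redex_depth)"
  have "rk f \<ge> 1" using False pj_copy_le(1)[OF _ assms(2)] by blast
  have "card ?N \<le> card (c ` copied)" using finite_copied by (intro card_mono) auto
  also have "\<dots> \<le> card copied" using finite_copied by (rule card_image_le)
  also have "\<dots> \<le> card (reach K r)"
    using copied_iff finite_subset[OF reach_subset_nodes[OF K_closed r_in_K] K_finite]
    by (intro card_mono) auto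
  finally have card_N: "card ?N \<le> 1 + ell" using assms(4) by simp
  have "(\<Sum>x\<in>?N. pj rk nn ell (sub Gr x)) \<le> card ?N * ?B"
    using sum_bounded_above[of ?N "\<lambda>x. pj rk nn ell (sub Gr x)" ?B] pj_copy_le(2)[OF _ assms(2)]
    by auto
  also have "\<dots> < (1 + ell) ^ (2 * rk f) * (1 + redex_depth)"
    using new_nodes_weight_lt[OF assms(1,3) \<open>rk f \<ge> 1\<close> card_N] .
  finally show ?thesis using pj_redex by simp
qed

lemma old_weight_le:
  "(\<Sum>x\<in>{x\<in>H_nodes. \<not> constr_tg Cs (sub Gr x)} - c ` copied. pj rk nn ell (sub Gr x))
    \<le> (\<Sum>x\<in>{x\<in>nodes G. \<not> constr_tg Cs (sub G x)} - {\<phi> l}. pj rk nn ell (sub G x))"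
proof -
  have "(\<Sum>x\<in>{x\<in>H_nodes. \<not> constr_tg Cs (sub Gr x)} - c ` copied. pj rk nn ell (sub Gr x))
      = (\<Sum>x\<in>{x\<in>H_nodes. \<not> constr_tg Cs (sub Gr x)} - c ` copied. pj rk nn ell (sub G x))"
    using pj_old(4) by (intro sum.cong) auto
  also have "\<dots> \<le> (\<Sum>x\<in>{x\<in>nodes G. \<not> constr_tg Cs (sub G x)} - {\<phi> l}. pj rk nn ell (sub G x))"
    using pj_old(1-3) G_finite by (intro sum_mono2) auto
  finally show ?thesis .
qed

text \<open>The redex \<open>\<phi> l\<close> leaves the sum, the other old nodes keep their weight, and all copies
  together weigh less than the redex did.\<close>
lemma pi_decrease:
  assumes "0 < ell" "\<forall>g. ar g \<le> d" "d \<le> ell" "card (reach K r) \<le> 1 + ell"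
  shows "pi Cs rk nn ell (sub Gr (redir \<rho>)) < pi Cs rk nn ell (G, \<rho>)"
proof -
  let ?NC = "{x\<in>H_nodes. \<not> constr_tg Cs (sub Gr x)}"
  let ?NCG = "{x\<in>nodes G. \<not> constr_tg Cs (sub G x)}"
  have "finite ?NC" using finite_subset[OF H_nodes_subset Gr_finite] by simp
  have "pi Cs rk nn ell (sub Gr (redir \<rho>)) \<le> (\<Sum>x\<in>?NC. pj rk nn ell (sub Gr x))"
    by (rule pi_sub_le[OF Gr_closed redir_root_in_Gr Gr_finite])
  also have "\<dots> = (\<Sum>x\<in>?NC \<inter> c ` copied. pj rk nn ell (sub Gr x))
      + (\<Sum>x\<in>?NC - c ` copied. pj rk nn ell (sub Gr x))"
    using sum.Int_Diff[OF \<open>finite ?NC\<close>] .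
  also have "\<dots> < pj rk nn ell (sub G (\<phi> l)) + (\<Sum>x\<in>?NCG - {\<phi> l}. pj rk nn ell (sub G x))"
    by (rule add_less_le_mono[OF copies_weight_lt[OF assms] old_weight_le])
  also have "\<dots> = pi Cs rk nn ell (G, \<rho>)"
  proof -
    have "finite ?NCG" "\<phi> l \<in> ?NCG" using G_finite redex_in_G non_constr_redex by auto
    from sum.remove[OF this, of "\<lambda>x. pj rk nn ell (sub G x)"] show ?thesis
      unfolding pi_eq_sum_non_constr[OF tg nrm_constr_G] by simp
  qed
  finally show ?thesis .
qed

lemma repr_lhs_ground_in_T:
  assumes closed_args: "\<forall>v\<in>nrm nn K l. lab K v \<noteq> None \<longrightarrow> closed_tg (sub K v)"
    and x: "x \<in> lhs_ground_nodes" and t: "repr K x t"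
  shows "t \<in> T"
proof -
  obtain v where v: "v \<in> nrm nn K l" "lab K v \<noteq> None" "x \<in> reach K v"
    using x by (auto simp: lhs_ground_nodes_def)
  have vr: "v \<in> reach K l" using v(1) lhs_args_in_K nrm_subset_att by blast
  have labeled: "\<forall>z\<in>reach K v. lab K z \<noteq> None" using closed_args v by (auto simp: closed_tg_def)
  have "morph_on (reach K v) \<phi> K G"
    unfolding morph_on_def
  proof
    fix z assume z: "z \<in> reach K v"
    have zl: "z \<in> reach K l" using reach_trans[OF vr z] .
    show "z \<in> nodes K \<and> \<phi> z \<in> nodes G \<and> lab K z = lab G (\<phi> z) \<and> att G (\<phi> z) = map \<phi> (att K z)
        \<and> set (att K z) \<subseteq> reach K v"
      using lhs_in_K[OF zl] hom_nodes[OF zl] hom_lab_att[OF zl] labeled z reach_att_trans[OF z] by auto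
  qed
  then have "repr G (\<phi> x) t" using morph_on_repr t v(3) labeled by blast
  moreover have "\<phi> x \<in> reach G (\<phi> v)" using hom_reach[OF vr v(3)] .
  moreover have "\<phi> v \<in> nrm nn G (\<phi> l)" using nrm_redex v(1) by blast
  ultimately show "t \<in> T" using nrm_terms_G redex_in_G unfolding nrm_terms_in_def by blast
qed

text \<open>Maximal sharing of the normal part of the left-hand side makes the term representation
  injective on its ground nodes, and all these terms occur in \<open>T\<close>.\<close>
lemma card_lhs_ground_le:
  assumes shared: "max_shared (cap_nrm nn (sub K l))"
    and closed_args: "\<forall>v\<in>nrm nn K l. lab K v \<noteq> None \<longrightarrow> closed_tg (sub K v)"
    and "finite T"
  shows "card lhs_ground_nodes \<le> card T"
proof -
  let ?C = "fst (cap_nrm nn (sub K l))"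
  define tm where "tm x = (SOME t. repr K x t)" for x
  have tm: "repr K x (tm x)" if "x \<in> lhs_ground_nodes" for x
    unfolding tm_def using repr_exists[OF K_finite K_closed K_acyclic] that lhs_parts_in_K(3)
    by (blast intro: someI_ex)
  have "set (att K z) \<subseteq> lhs_ground_nodes" if z: "z \<in> lhs_ground_nodes" for z
  proof -
    obtain v where v: "v \<in> nrm nn K l" "lab K v \<noteq> None" "z \<in> reach K v"
      using z by (auto simp: lhs_ground_nodes_def)
    have "set (att K z) \<subseteq> reach K v"
      using reach_att_trans[OF v(3)] z lhs_parts_in_K(3) by blast
    then show ?thesis using v(1,2) by (auto simp: lhs_ground_nodes_def)
  qed
  then have "\<forall>z\<in>lhs_ground_nodes. lab ?C z = lab K z \<and> att ?C z = att K z \<and> set (att K z) \<subseteq> lhs_ground_nodes"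
    using cap_nrm_lhs_agree by blast
  then have repr_C: "repr ?C x (tm x)" if "x \<in> lhs_ground_nodes" for x
    using repr_agree[OF tm[OF that] that] by blast
  have "inj_on tm lhs_ground_nodes"
  proof (rule inj_onI)
    fix x y assume x: "x \<in> lhs_ground_nodes" and y: "y \<in> lhs_ground_nodes" and "tm x = tm y"
    then have "repr ?C x (tm x)" "repr ?C y (tm x)" using repr_C by metis+
    then show "x = y"
      using shared cap_nrm_lhs_agree[OF x] cap_nrm_lhs_agree[OF y] unfolding max_shared_def by blast
  qed
  moreover have "tm ` lhs_ground_nodes \<subseteq> T"
    using repr_lhs_ground_in_T[OF closed_args] tm by blast
  ultimately show ?thesis using card_inj_on_le assms(3) by blast
qed

lemma card_rhs_le_if_inf:
  assumes "max_shared (cap_nrm nn (sub K l))"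
    and "\<forall>v\<in>nrm nn K l. lab K v \<noteq> None \<longrightarrow> closed_tg (sub K v)"
    and iii: "card ({v\<in>nrm nn K l. lab K v = None} \<union> (\<Union>v\<in>safe nn K l. nodes (fst (sub K v)))) \<le> d"
    and iv: "card (nodes (fst (sub K r))) \<le> card (nodes (fst (sub K l)))
         + card (\<Union>v\<in>nrm nn K r. nodes (fst (sub K v)))"
    and "finite T"
  shows "card (reach K r) \<le> 1 + 2 * card T + 2 * d"
proof -
  let ?V = "lhs_var_args \<union> lhs_safe_nodes"
  have fin: "finite lhs_ground_nodes" "finite ?V"
    using lhs_parts_in_K K_finite finite_subset by auto
  have V: "card ?V \<le> d" using iii by (simp add: lhs_var_args_def lhs_safe_nodes_def)
  note ground = card_lhs_ground_le[OF assms(1,2,5)]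
  have "card (reach K l) \<le> card (insert l (lhs_ground_nodes \<union> ?V))"
    using reach_lhs_subset fin by (intro card_mono) auto
  also have "\<dots> \<le> Suc (card (lhs_ground_nodes \<union> ?V))"
    using fin by (simp add: card_insert_if)
  also have "\<dots> \<le> Suc (card lhs_ground_nodes + card ?V)"
    using card_Un_le by simp
  finally have lhs: "card (reach K l) \<le> 1 + card T + d" using ground V by simp
  have "card (nrm_nodes nn K r) \<le> card (lhs_ground_nodes \<union> ?V)"
    using nrm_nodes_rhs_subset fin by (intro card_mono) auto
  also have "\<dots> \<le> card lhs_ground_nodes + card ?V"
    by (rule card_Un_le)
  finally have rhs: "card (nrm_nodes nn K r) \<le> card T + d" using ground V by simp
  show ?thesis using iv lhs rhs by (simp add: nrm_nodes_def)
qed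

lemma card_rhs_le:
  assumes rule_in: "(K, l, r) \<in> Gs"
    and d_fin: "\<forall>(K, l, r)\<in>G_fin Cs Gs. card (nodes (fst (sub K r))) \<le> d"
    and inf_i: "\<forall>(K, l, r)\<in>G_inf Cs Gs. max_shared (cap_nrm nn (sub K l))"
    and inf_ii: "\<forall>(K, l, r)\<in>G_inf Cs Gs. \<forall>v\<in>nrm nn K l. lab K v \<noteq> None \<longrightarrow> closed_tg (sub K v)"
    and inf_iii: "\<forall>(K, l, r)\<in>G_inf Cs Gs.
       card ({v\<in>nrm nn K l. lab K v = None} \<union> (\<Union>v\<in>safe nn K l. nodes (fst (sub K v)))) \<le> d"
    and inf_iv: "\<forall>(K, l, r)\<in>G_inf Cs Gs.
       card (nodes (fst (sub K r))) \<le> card (nodes (fst (sub K l)))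
         + card (\<Union>v\<in>nrm nn K r. nodes (fst (sub K v)))"
    and "finite T" and ell: "2 * (card T + d) \<le> ell"
  shows "card (reach K r) \<le> 1 + ell"
proof (cases "f \<in> D_inf Cs Gs")
  case True
  then have "(K, l, r) \<in> G_inf Cs Gs" using rule_in lab_l by (simp add: G_inf_def)
  then have "card (reach K r) \<le> 1 + 2 * card T + 2 * d"
    using card_rhs_le_if_inf inf_i inf_ii inf_iii inf_iv \<open>finite T\<close> by fastforce
  then show ?thesis using ell by simp
next
  case False
  then have "(K, l, r) \<in> G_fin Cs Gs" using rule_in lab_l f_not_constr by (simp add: G_fin_def)
  then show ?thesis using d_fin ell by fastforce
qed

end

section \<open>Decrease of the interpretation along reductions\<close>

lemma rstep_invariants:
  assumes constr: "\<forall>R\<in>Gs. constructor_rule ar Cs R" and sep: "separation ar Cs nn"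
    and prec: "precedence Cs prec rk" and PT: "\<forall>(K, l, r)\<in>Gs. pt nn prec (sub K r) (sub K l)"
    and step: "rstep ar Gs X Y"
    and inv: "nrm_args_constr Cs nn (fst X)" "nrm_terms_in T nn (fst X)"
  shows "nrm_args_constr Cs nn (fst Y) \<and> nrm_terms_in T nn (fst Y)"
proof -
  obtain G \<rho> where X: "X = (G, \<rho>)" by (cases X)
  from step obtain K l r \<phi> c where "is_tg ar X" "(K, l, r) \<in> Gs" "hom (sub K l) (fst X) \<phi>"
    "inj_on c (labeled_nodes (sub K r))" "c ` labeled_nodes (sub K r) \<inter> nodes (fst X) = {}"
    and Y: "Y = rewrite_result X K l r \<phi> c" unfolding rstep_def by blast
  then interpret S: rewrite_step_inv ar Cs nn prec rk K l r G \<rho> \<phi> c T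
    using constr sep prec PT inv X by unfold_locales auto
  show ?thesis
    using Y X S.rewrite_result_eq S.result_nrm_args_constr S.result_nrm_terms_in by simp
qed

lemma reachable_invariants:
  assumes "\<forall>R\<in>Gs. constructor_rule ar Cs R" "separation ar Cs nn"
    and "precedence Cs prec rk" "\<forall>(K, l, r)\<in>Gs. pt nn prec (sub K r) (sub K l)"
    and "is_tg ar G0" "basic_tg Cs G0" "(rstep ar Gs)\<^sup>*\<^sup>* G0 G"
  shows "nrm_args_constr Cs nn (fst G) \<and> nrm_terms_in (nrm_terms nn G0) nn (fst G)"
  using assms(7)
proof induction
  case base
  then show ?case using basic_tg_invariants[OF assms(2,5,6)] by blast
next
  case (step Y Z)
  then show ?case using rstep_invariants[OF assms(1-4)] by blast
qed

theorem mainTheorem5: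
  fixes ar :: "'f::finite \<Rightarrow> nat" and Cs :: "'f set" and nn :: "'f \<Rightarrow> nat"
    and prec :: "'f \<Rightarrow> 'f \<Rightarrow> bool" and rk :: "'f \<Rightarrow> nat"
    and Gs :: "'f rule set" and d :: nat and ell :: nat
    and G0 G H :: "'f tg"
  assumes constr: "\<forall>R\<in>Gs. constructor_rule ar Cs R"
    and sep: "separation ar Cs nn"
    and prec: "precedence Cs prec rk"
    and PT: "\<forall>(K, l, r)\<in>Gs. pt nn prec (sub K r) (sub K l)"
    and d_ar: "\<forall>f. ar f \<le> d"
    and d_fin: "\<forall>(K, l, r)\<in>G_fin Cs Gs. card (nodes (fst (sub K r))) \<le> d"
    and inf_i: "\<forall>(K, l, r)\<in>G_inf Cs Gs. max_shared (cap_nrm nn (sub K l))"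
    and inf_ii: "\<forall>(K, l, r)\<in>G_inf Cs Gs. \<forall>v\<in>nrm nn K l. lab K v \<noteq> None \<longrightarrow> closed_tg (sub K v)"
    and inf_iii: "\<forall>(K, l, r)\<in>G_inf Cs Gs.
       card ({v\<in>nrm nn K l. lab K v = None} \<union> (\<Union>v\<in>safe nn K l. nodes (fst (sub K v)))) \<le> d"
    and inf_iv: "\<forall>(K, l, r)\<in>G_inf Cs Gs.
       card (nodes (fst (sub K r))) \<le> card (nodes (fst (sub K l)))
         + card (\<Union>v\<in>nrm nn K r. nodes (fst (sub K v)))"
    and G0: "is_tg ar G0" "closed_tg G0" "basic_tg Cs G0"
    and steps: "(rstep ar Gs)\<^sup>*\<^sup>* G0 G" "rstep ar Gs G H"
    and ell_pos: "0 < ell"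
    and ell_bound: "2 * (card (\<Union>v\<in>nrm nn (fst G0) (snd G0). nodes (fst (sub (fst G0) v))) + d) \<le> ell"
  shows "pi Cs rk nn ell H < pi Cs rk nn ell G"
proof -
  let ?T = "nrm_terms nn G0"
  note T = card_nrm_terms_le[OF G0(1), of nn]
  have inv: "nrm_args_constr Cs nn (fst G)" "nrm_terms_in ?T nn (fst G)"
    using reachable_invariants[OF constr sep prec PT G0(1,3) steps(1)] by auto
  obtain Gg \<rho> where G: "G = (Gg, \<rho>)" by (cases G)
  from steps(2) obtain K l r \<phi> c where "is_tg ar G" and rule: "(K, l, r) \<in> Gs"
    and "hom (sub K l) (fst G) \<phi>" "inj_on c (labeled_nodes (sub K r))"
    "c ` labeled_nodes (sub K r) \<inter> nodes (fst G) = {}"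
    and H: "H = rewrite_result G K l r \<phi> c" unfolding rstep_def by blast
  then interpret S: rewrite_step_inv ar Cs nn prec rk K l r Gg \<rho> \<phi> c ?T
    using constr sep prec PT inv G by unfold_locales auto
  have "2 * (card ?T + d) \<le> ell"
    using T(2) ell_bound by (simp add: nrm_nodes_def)
  then have "card (reach K r) \<le> 1 + ell"
    using S.card_rhs_le[OF rule d_fin inf_i inf_ii inf_iii inf_iv T(1)] by blast
  then show ?thesis
    using S.pi_decrease[OF ell_pos d_ar] S.rewrite_result_eq H G ell_bound by simp
qed

end
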